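(* Let $G$ be a graph on vertex set $[n]$ given as a dynamic stream of edge updates $(i,j,\Delta)$ with $\Delta\in\{+1,-1\}$, where at the end of the stream every edge has net multiplicity $0$ or $1$ and the stream length is polynomial in $n$. There is a streaming interactive proof that verifies (with constant probability of error) the number of triangles in $G$ with cost $(\log^2 n, \log^2 n)$, i.e. verifier space $O(\log^2 n)$ bits and total communication $O(\log^2 n)$ bits.
   Context: A streaming interactive proof (SIP) for a function $f$ of a data stream $\tau$: a randomized verifier $V$ reads $\tau$ once in a streaming fashion (as does the prover $P$); after the stream has passed, $V$ and $P$ exchange messages, after which $V$ outputs a value or $\perp$ (rejection). There must be a prover strategy causing $V$ to output $f(\tau)$ with probability at least $2/3$, and for every prover strategy $V$ must output a value in $\{f(\tau),\perp\}$ with probability at least $2/3$. Cost $(A,B)$ means verifier space $O(A)$ bits and total communication $O(B)$ bits. A triangle is a set of three vertices pairwise joined by edges. *)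

theory Defs
  imports "HOL-Probability.Probability"
begin

type_synonym update = "nat \<times> nat \<times> int"

definition mult :: "update list \<Rightarrow> nat \<Rightarrow> nat \<Rightarrow> int" where
  "mult \<tau> i j = sum_list (map (\<lambda>(a, b, d). if {a, b} = {i, j} then d else 0) \<tau>)"

definition valid_stream :: "nat \<Rightarrow> update list \<Rightarrow> bool" where
  "valid_stream n \<tau> \<longleftrightarrow>
     (\<forall>(i, j, d) \<in> set \<tau>. i < n \<and> j < n \<and> i \<noteq> j \<and> (d = 1 \<or> d = -1)) \<and>
     (\<forall>i j. i < n \<longrightarrow> j < n \<longrightarrow> i \<noteq> j \<longrightarrow> mult \<tau> i j = 0 \<or> mult \<tau> i j = 1)"

definition triangles :: "nat \<Rightarrow> update list \<Rightarrow> nat" where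
  "triangles n \<tau> = card {T. T \<subseteq> {..<n} \<and> card T = 3 \<and>
       (\<forall>x\<in>T. \<forall>y\<in>T. x \<noteq> y \<longrightarrow> mult \<tau> x y = 1)}"

text \<open>Memory states are natural numbers;
  a verifier with S bits of space uses only states below 2^S.
  v_step: processes one stream update (fresh randomness allowed);
  v_query i s: in round i, produces the verifier message and new state;
  v_receive i s a: processes prover answer a in round i;
  v_out: final output, None meaning rejection.\<close>
record sip_verifier =
  v_init :: "nat pmf"
  v_step :: "nat \<Rightarrow> update \<Rightarrow> nat pmf"
  v_query :: "nat \<Rightarrow> nat \<Rightarrow> (bool list \<times> nat) pmf"
  v_receive :: "nat \<Rightarrow> nat \<Rightarrow> bool list \<Rightarrow> nat pmf"
  v_out :: "nat \<Rightarrow> nat option"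
  v_rounds :: nat

definition space_bounded :: "nat \<Rightarrow> sip_verifier \<Rightarrow> bool" where
  "space_bounded S V \<longleftrightarrow>
     set_pmf (v_init V) \<subseteq> {..<2^S} \<and>
     (\<forall>s<2^S. \<forall>u. set_pmf (v_step V s u) \<subseteq> {..<2^S}) \<and>
     (\<forall>i. \<forall>s<2^S. snd ` set_pmf (v_query V i s) \<subseteq> {..<2^S}) \<and>
     (\<forall>i a. \<forall>s<2^S. set_pmf (v_receive V i s a) \<subseteq> {..<2^S})"

definition stream_run :: "sip_verifier \<Rightarrow> update list \<Rightarrow> nat pmf" where
  "stream_run V \<tau> = foldl (\<lambda>p u. bind_pmf p (\<lambda>s. v_step V s u)) (v_init V) \<tau>"

text \<open>A prover strategy (for a fixed stream, which it has seen) maps the list of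
  verifier messages received so far to its next message. The transcript is the list of
  (verifier message, prover message) pairs.\<close>
type_synonym prover = "bool list list \<Rightarrow> bool list"

primrec interact :: "sip_verifier \<Rightarrow> prover \<Rightarrow> nat \<Rightarrow> nat \<Rightarrow> (bool list \<times> bool list) list
     \<Rightarrow> (nat \<times> (bool list \<times> bool list) list) pmf" where
  "interact V P 0 s tr = return_pmf (s, tr)"
| "interact V P (Suc k) s tr =
     bind_pmf (v_query V (length tr) s) (\<lambda>(m, s').
       let a = P (map fst tr @ [m]) in
       bind_pmf (v_receive V (length tr) s' a) (\<lambda>s''. interact V P k s'' (tr @ [(m, a)])))"

definition run :: "sip_verifier \<Rightarrow> prover \<Rightarrow> update list \<Rightarrow> (nat option \<times> (bool list \<times> bool list) list) pmf" where
  "run V P \<tau> = map_pmf (\<lambda>(s, tr). (v_out V s, tr))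
                (bind_pmf (stream_run V \<tau>) (\<lambda>s. interact V P (v_rounds V) s []))"

definition comm :: "(bool list \<times> bool list) list \<Rightarrow> nat" where
  "comm tr = sum_list (map (\<lambda>(m, a). length m + length a) tr)"

text \<open>V is an SIP for f on the streams satisfying 'valid', with space S bits and
  communication C bits (communication measured on the honest execution).\<close>
definition is_SIP :: "(update list \<Rightarrow> bool) \<Rightarrow> (update list \<Rightarrow> nat) \<Rightarrow> nat \<Rightarrow> nat \<Rightarrow> sip_verifier \<Rightarrow> bool" where
  "is_SIP valid f S C V \<longleftrightarrow> space_bounded S V \<and>
     (\<forall>\<tau>. valid \<tau> \<longrightarrow>
        (\<exists>P. measure_pmf.prob (run V P \<tau>) {x. fst x = Some (f \<tau>)} \<ge> 2/3 \<and>
             (\<forall>x\<in>set_pmf (run V P \<tau>). comm (snd x) \<le> C)) \<and>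
        (\<forall>P. measure_pmf.prob (run V P \<tau>) {x. fst x = Some (f \<tau>) \<or> fst x = None} \<ge> 2/3))"

end

theory Submission
  imports Defs "HOL-Number_Theory.Cong" "HOL-Computational_Algebra.Primes"
    "HOL-Computational_Algebra.Polynomial"
    "HOL-Combinatorics.Multiset_Permutations"
begin

text \<open>The verifier runs the sum-check protocol over \<open>\<int>/p\<close> on the polynomial
  \<open>F(x, y, z) = \<tilde>A(x, y) \<tilde>A(y, z) \<tilde>A(x, z)\<close> in \<open>3l\<close> variables, where \<open>\<tilde>A\<close> is the
  multilinear extension of the adjacency matrix indexed by \<open>{0,1}\<^sup>l\<close>, \<open>2\<^sup>l \<ge> n\<close>. Summed over
  the Boolean cube, \<open>F\<close> counts every triangle six times. At the end the verifier needs \<open>F\<close> at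
  its secret random point only, and the three factors are linear in the adjacency matrix, hence
  can be maintained along the stream of edge updates in \<open>O(l log p)\<close> bits.
  In each round the prover sends a quadratic; a false claim survives a round only if the random
  coordinate is one of the at most two points where the sent quadratic agrees with the true one,
  so a cheating prover wins with probability at most \<open>6l/p\<close>. A prime \<open>p\<close> in
  \<open>(16 n\<^sup>3, 2 (16 n\<^sup>3)\<^sup>2]\<close>, which exists by a Chebyshev-type estimate, makes this at most \<open>1/3\<close>,
  exceeds the triangle count, and keeps space and communication at \<open>O(l log p) = O(log\<^sup>2 n)\<close>.\<close>

section \<open>A prime in a polynomial window\<close>

lemma less_power_of_ge_2: "2 \<le> p \<Longrightarrow> n < p ^ n" for p n :: nat
  using less_exp[of n] power_mono[of 2 p n] by linarith

lemma multiplicity_Suc_eq_card: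
  fixes p n :: nat assumes p: "prime p"
  shows "multiplicity p (Suc n) = card {i\<in>{1..Suc n}. p ^ i dvd Suc n}"
proof -
  let ?v = "multiplicity p (Suc n)"
  have iff: "p ^ i dvd Suc n \<longleftrightarrow> i \<le> ?v" for i
    using p by (intro power_dvd_iff_le_multiplicity) (auto simp: prime_gt_1_nat)
  have "?v < p ^ ?v" using p by (intro less_power_of_ge_2) (simp add: prime_ge_2_nat)
  also have "p ^ ?v \<le> Suc n" by (intro dvd_imp_le multiplicity_dvd) simp
  finally have "{i\<in>{1..Suc n}. p ^ i dvd Suc n} = {1..?v}" unfolding iff by auto
  then show ?thesis by simp
qed

lemma multiplicity_fact:
  fixes p n :: nat assumes p: "prime p"
  shows "multiplicity p (fact n) = (\<Sum>i\<in>{1..n}. n div p ^ i)"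
proof (induction n)
  case 0
  then show ?case by simp
next
  case (Suc n)
  have "multiplicity p (fact (Suc n) :: nat) = multiplicity p (Suc n * fact n)" by simp
  also have "\<dots> = multiplicity p (Suc n) + multiplicity p (fact n :: nat)"
    using p by (intro prime_elem_multiplicity_mult_distrib) auto
  also have "\<dots> = (\<Sum>i\<in>{1..Suc n}. if p ^ i dvd Suc n then 1 else 0) + (\<Sum>i\<in>{1..n}. n div p ^ i)"
    using Suc multiplicity_Suc_eq_card[OF p, of n]
    by (simp only: card_eq_sum sum.inter_filter[OF finite_atLeastAtMost])
  also have "(\<Sum>i\<in>{1..n}. n div p ^ i) = (\<Sum>i\<in>{1..Suc n}. n div p ^ i)"
    using less_power_of_ge_2[of p "Suc n"] p by (simp add: prime_ge_2_nat)
  also have "(\<Sum>i\<in>{1..Suc n}. if p ^ i dvd Suc n then 1 else 0) + \<dots> = (\<Sum>i\<in>{1..Suc n}. Suc n div p ^ i)"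
  proof -
    have "Suc n div p ^ i = n div p ^ i + (if p ^ i dvd Suc n then 1 else 0)" for i
      using div_Suc[of n "p ^ i"] by (simp add: dvd_eq_mod_eq_0)
    then show ?thesis by (simp add: sum.distrib)
  qed
  finally show ?case .
qed

lemma double_div_le: "(2 * M) div q \<le> 2 * (M div q) + 1" for M q :: nat
proof (cases "q = 0")
  case False
  have h: "M = M div q * q + M mod q" by simp
  have "2 * M = 2 * (M div q * q + M mod q)" using h by simp
  also have "\<dots> = (2 * (M div q)) * q + 2 * (M mod q)" by (simp only: distrib_left mult.assoc)
  finally have "2 * M = (2 * (M div q)) * q + 2 * (M mod q)" .
  moreover have "2 * (M mod q) < 2 * q" using False by simp
  ultimately have "2 * M < (2 * (M div q) + 2) * q" by (simp add: algebra_simps)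
  then have "2 * M div q < 2 * (M div q) + 2" using False by (simp add: div_less_iff_less_mult)
  then show ?thesis by simp
qed simp

lemma double_div_ge: "2 * (M div q) \<le> (2 * M) div q" for M q :: nat
proof (cases "q = 0")
  case False
  have A: "2 * (M div q) * q \<le> 2 * M" using div_times_less_eq_dividend[of M q] by (simp only: mult.assoc mult_le_mono2)
  then show ?thesis using div_le_mono[OF A, of q] False by simp
qed simp

lemma multiplicity_central_binomial:
  fixes p M :: nat assumes p: "prime p"
  shows "multiplicity p ((2 * M) choose M) = (\<Sum>i\<in>{1..2 * M}. (2 * M) div p ^ i - 2 * (M div p ^ i))"
proof -
  have "fact (2 * M) = (fact M * fact M * ((2 * M) choose M) :: nat)"
    using binomial_fact_lemma[of M "2 * M"] by (simp add: mult_2)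
  then have "multiplicity p (fact (2 * M) :: nat)
      = 2 * multiplicity p (fact M :: nat) + multiplicity p ((2 * M) choose M)"
    using p by (simp add: prime_elem_multiplicity_mult_distrib)
  then have v: "multiplicity p ((2 * M) choose M)
      = (\<Sum>i\<in>{1..2 * M}. (2 * M) div p ^ i) - 2 * (\<Sum>i\<in>{1..M}. M div p ^ i)"
    using multiplicity_fact[OF p] by simp
  have ext: "(\<Sum>i\<in>{1..M}. M div p ^ i) = (\<Sum>i\<in>{1..2 * M}. M div p ^ i)"
  proof (rule sum.mono_neutral_left)
    show "\<forall>i\<in>{1..2 * M} - {1..M}. M div p ^ i = 0"
    proof
      fix i assume "i \<in> {1..2 * M} - {1..M}"
      then have "M < i" by auto
      also have "i < p ^ i" using p by (intro less_power_of_ge_2) (simp add: prime_ge_2_nat)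
      finally show "M div p ^ i = 0" by simp
    qed
  qed auto
  show ?thesis
    unfolding v ext sum_distrib_left by (rule sum_subtractf_nat[symmetric]) (rule double_div_ge)
qed

lemma power_card_powers_le:
  fixes p x m :: nat assumes "2 \<le> p" "1 \<le> x"
  shows "p ^ card {i\<in>{1..m}. p ^ i \<le> x} \<le> x"
proof (cases "{i\<in>{1..m}. p ^ i \<le> x} = {}")
  case False
  let ?E = "{i\<in>{1..m}. p ^ i \<le> x}"
  have "card ?E \<le> card {1..Max ?E}" by (intro card_mono) auto
  then have "p ^ card ?E \<le> p ^ Max ?E" using assms by (intro power_increasing) auto
  also have "\<dots> \<le> x" using Max_in[of ?E] False by auto
  finally show ?thesis .
next
  case True
  then have "p ^ card {i\<in>{1..m}. p ^ i \<le> x} = 1" by (simp only: card.empty power_0)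
  then show ?thesis using assms by linarith
qed

lemma prime_power_multiplicity_central_binomial_le:
  fixes p M :: nat assumes p: "prime p" and M: "0 < M"
  shows "p ^ multiplicity p ((2 * M) choose M) \<le> 2 * M"
proof -
  have "multiplicity p ((2 * M) choose M) \<le> (\<Sum>i\<in>{1..2 * M}. if p ^ i \<le> 2 * M then 1 else 0)"
    unfolding multiplicity_central_binomial[OF p]
  proof (rule sum_mono)
    fix i show "(2 * M) div p ^ i - 2 * (M div p ^ i) \<le> (if p ^ i \<le> 2 * M then 1 else 0)"
      using double_div_le[of M "p ^ i"] by auto
  qed
  also have "\<dots> = card {i\<in>{1..2 * M}. p ^ i \<le> 2 * M}"
    by (simp only: card_eq_sum sum.inter_filter[OF finite_atLeastAtMost])
  finally have "p ^ multiplicity p ((2 * M) choose M) \<le> p ^ card {i\<in>{1..2 * M}. p ^ i \<le> 2 * M}"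
    using p by (intro power_increasing) (use prime_ge_1_nat in auto)
  also have "\<dots> \<le> 2 * M" using p M by (intro power_card_powers_le) (auto simp: prime_ge_2_nat)
  finally show ?thesis .
qed

lemma le_prime_factor_bound:
  fixes c N B :: nat
  assumes "0 < c" and "1 \<le> B" and "\<And>q. q \<in> prime_factors c \<Longrightarrow> q \<le> N \<and> q ^ multiplicity q c \<le> B"
  shows "c \<le> B ^ N"
proof -
  have "card (prime_factors c) \<le> card {1..N}"
    using assms(3) by (intro card_mono) (use prime_ge_1_nat in \<open>auto simp: in_prime_factors_iff\<close>)
  then have card: "card (prime_factors c) \<le> N" by simp
  have "c = (\<Prod>q\<in>prime_factors c. q ^ multiplicity q c)" using prime_factorization_nat[OF assms(1)] .
  also have "\<dots> \<le> B ^ N" by (rule prod_le_power) (use assms card in auto)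
  finally show ?thesis .
qed

lemma double_square_le_pow2: "8 \<le> N \<Longrightarrow> 2 * N^2 \<le> 2 ^ N" for N :: nat
proof (induction N rule: nat_induct_at_least)
  case (Suc N)
  have "2 * (Suc N)^2 \<le> 2 * (2 * N^2)"
  proof -
    have "8 * N \<le> N * N" using Suc.hyps by (intro mult_le_mono1)
    then have "2 * N + 1 \<le> N * N" using Suc.hyps by linarith
    then show ?thesis by (simp add: power2_eq_square)
  qed
  also have "\<dots> \<le> 2 * 2 ^ N" using Suc.IH by simp
  finally show ?case by simp
qed simp

text \<open>A crude Bertrand postulate: if no prime lay in \<open>(N, 2N\<^sup>2]\<close>, the central binomial
  coefficient \<open>\<binom>2M M\<close> with \<open>M = N\<^sup>2\<close> would have at most \<open>N\<close> prime factors, each contributing at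
  most \<open>2M\<close>, contradicting \<open>\<binom>2M M \<ge> 4\<^sup>M / 2M\<close>.\<close>
lemma prime_between_square:
  fixes N :: nat assumes N: "8 \<le> N"
  shows "\<exists>p. prime p \<and> N < p \<and> p \<le> 2 * N^2"
proof (rule ccontr)
  assume no_prime: "\<not> ?thesis"
  define M where "M = N^2"
  have M0: "0 < M" using N by (simp add: M_def)
  let ?C = "(2 * M) choose M"
  have "?C \<le> (2 * M) ^ N"
  proof (rule le_prime_factor_bound)
    fix q assume q: "q \<in> prime_factors ?C"
    then have "q dvd fact (2 * M)"
      by (metis dvd_trans in_prime_factors_iff binomial_fact_lemma[of M "2 * M"] dvd_triv_right
          mult_2 le_add2 add_diff_cancel_left')
    then have "q \<le> 2 * M" using q prime_dvd_fact_iff by (auto simp: in_prime_factors_iff)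
    then have "q \<le> N" using no_prime q unfolding M_def by (meson in_prime_factors_iff not_le)
    then show "q \<le> N \<and> q ^ multiplicity q ?C \<le> 2 * M"
      using q M0 prime_power_multiplicity_central_binomial_le by (auto simp: in_prime_factors_iff)
  qed (use M0 in simp_all)
  moreover have "4 ^ M \<le> 2 * M * ?C"
  proof -
    have "4 ^ M / (2 * real M) \<le> real ?C" using central_binomial_lower_bound[OF M0] .
    then have "real (4 ^ M) \<le> real (2 * M) * real ?C" using M0 by (simp add: field_simps)
    then show ?thesis by (simp only: of_nat_le_iff of_nat_mult[symmetric])
  qed
  ultimately have "2 ^ (2 * M) \<le> (2 * M) ^ (N + 1)"
    by (simp add: power_mult) (metis mult_le_mono2 order_trans)
  also have "\<dots> \<le> (2 ^ N) ^ (N + 1)"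
    using double_square_le_pow2[OF N] by (intro power_mono) (auto simp: M_def)
  also have "\<dots> = 2 ^ (N * (N + 1))" by (simp only: power_mult)
  finally have "2 * M \<le> N * (N + 1)" using power_increasing_iff[of "2::nat"] by simp
  then show False using N by (simp add: M_def power2_eq_square algebra_simps)
qed

section \<open>Multilinear extensions over the Boolean cube\<close>

fun cube_basis :: "nat \<Rightarrow> int list \<Rightarrow> int" where
  "cube_basis i [] = 1"
| "cube_basis i (u # us) = (if odd i then u else 1 - u) * cube_basis (i div 2) us"

fun cube_point :: "nat \<Rightarrow> nat \<Rightarrow> int list" where
  "cube_point 0 i = []"
| "cube_point (Suc l) i = (if odd i then 1 else 0) # cube_point l (i div 2)"

definition cube :: "nat \<Rightarrow> int list set" where
  "cube k = {xs. set xs \<subseteq> {0,1} \<and> length xs = k}"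

lemma finite_cube[simp]: "finite (cube k)"
  unfolding cube_def by (rule finite_lists_length_eq) simp

lemma card_cube: "card (cube k) = 2 ^ k"
proof -
  have "card {0::int,1} = 2" by simp
  then show ?thesis unfolding cube_def by (simp add: card_lists_length_eq numeral_2_eq_2)
qed

lemma cube_0: "cube 0 = {[]}"
  by (auto simp: cube_def)

lemma length_cube_point[simp]: "length (cube_point l i) = l"
  by (induction l arbitrary: i) auto

lemma cube_point_in_cube: "cube_point l i \<in> cube l"
  unfolding cube_def by (induction l arbitrary: i) auto

lemma cube_basis_cube_point: "i < 2 ^ l \<Longrightarrow> j < 2 ^ l \<Longrightarrow> cube_basis i (cube_point l j) = (if i = j then 1 else 0)"
proof (induction l arbitrary: i j)
  case 0 then show ?case by simp
next
  case (Suc l)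
  have i2: "i div 2 < 2 ^ l" "j div 2 < 2 ^ l" using Suc.prems by auto
  have eq: "i = j \<longleftrightarrow> (odd i = odd j \<and> i div 2 = j div 2)"
    by (metis div_mult_mod_eq odd_iff_mod_2_eq_one not_mod_2_eq_1_eq_0)
  show ?case using Suc.IH[OF i2] eq by auto
qed

lemma inj_on_cube_point: "inj_on (cube_point l) {..<2^l}"
proof (rule inj_onI)
  fix i j assume ij: "i \<in> {..<2^l}" "j \<in> {..<2^l}" "cube_point l i = cube_point l j"
  have a: "i < 2^l" "j < 2^l" using ij by auto
  have "cube_basis i (cube_point l i) = 1" using cube_basis_cube_point[OF a(1) a(1)] by simp
  then have "cube_basis i (cube_point l j) = 1" using ij by simp
  then show "i = j" using cube_basis_cube_point[OF a(1) a(2)] by (auto split: if_splits)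
qed

lemma cube_point_image: "cube_point l ` {..<2^l} = cube l"
proof -
  have "cube_point l ` {..<2^l} \<subseteq> cube l" using cube_point_in_cube by auto
  moreover have "card (cube_point l ` {..<2^l}) = card (cube l)"
    using card_image[OF inj_on_cube_point] card_cube by simp
  ultimately show ?thesis by (intro card_subset_eq) auto
qed

lemma sum_cube_reindex: "(\<Sum>x\<in>cube l. f x) = (\<Sum>i<2^l. f (cube_point l i))"
  using sum.reindex[OF inj_on_cube_point, of f] cube_point_image by simp

lemma cube_Suc: "cube (Suc k) = Cons 0 ` cube k \<union> Cons 1 ` cube k"
proof
  show "cube (Suc k) \<subseteq> Cons 0 ` cube k \<union> Cons 1 ` cube k"
  proof
    fix xs assume "xs \<in> cube (Suc k)"
    then obtain x ys where "xs = x # ys" "x \<in> {0,1}" "ys \<in> cube k"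
      unfolding cube_def by (cases xs) auto
    then show "xs \<in> Cons 0 ` cube k \<union> Cons 1 ` cube k" by auto
  qed
qed (auto simp: cube_def)

lemma sum_cube_Suc: "(\<Sum>b\<in>cube (Suc k). f b) = (\<Sum>b\<in>cube k. f (0 # b) + f (1 # b))"
proof -
  have "(\<Sum>b\<in>cube (Suc k). f b) = (\<Sum>b\<in>Cons 0 ` cube k. f b) + (\<Sum>b\<in>Cons 1 ` cube k. f b)"
    unfolding cube_Suc by (rule sum.union_disjoint) auto
  also have "\<dots> = (\<Sum>b\<in>cube k. f (0 # b)) + (\<Sum>b\<in>cube k. f (1 # b))"
    by (simp add: sum.reindex)
  finally show ?thesis by (simp add: sum.distrib)
qed

lemma sum_cube_add: "(\<Sum>b\<in>cube (a + c). f b) = (\<Sum>x\<in>cube a. \<Sum>y\<in>cube c. f (x @ y))"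
proof (induction a arbitrary: f)
  case 0
  then show ?case by (simp add: cube_0)
next
  case (Suc a)
  have "(\<Sum>b\<in>cube (Suc a + c). f b) = (\<Sum>b\<in>cube (a + c). f (0 # b) + f (1 # b))"
    using sum_cube_Suc[where k="a + c" and f=f] by simp
  also have "\<dots> = (\<Sum>x\<in>cube a. \<Sum>y\<in>cube c. f (0 # x @ y) + f (1 # x @ y))"
    using Suc.IH[of "\<lambda>b. f (0 # b) + f (1 # b)"] by simp
  also have "\<dots> = (\<Sum>x\<in>cube (Suc a). \<Sum>y\<in>cube c. f (x @ y))"
    using sum_cube_Suc[where k=a and f="\<lambda>x. \<Sum>y\<in>cube c. f (x @ y)"] by (simp add: sum.distrib)
  finally show ?case .
qed

definition has_degree_le :: "nat \<Rightarrow> (int \<Rightarrow> int) \<Rightarrow> bool" where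
  "has_degree_le d f \<longleftrightarrow> (\<exists>q::int poly. degree q \<le> d \<and> (\<forall>X. f X = poly q X))"

lemma has_degree_le_const: "has_degree_le d (\<lambda>X. c)"
  unfolding has_degree_le_def by (rule exI[of _ "[:c:]"]) simp

lemma has_degree_le_linear: "has_degree_le 1 (\<lambda>X. a * X + b)"
  unfolding has_degree_le_def by (rule exI[of _ "[:b, a:]"]) (simp add: algebra_simps)

lemma has_degree_le_mono: "has_degree_le d f \<Longrightarrow> d \<le> d' \<Longrightarrow> has_degree_le d' f"
  unfolding has_degree_le_def by (blast intro: order_trans)

lemma has_degree_le_add: "has_degree_le d f \<Longrightarrow> has_degree_le d g \<Longrightarrow> has_degree_le d (\<lambda>X. f X + g X)"
  unfolding has_degree_le_def
proof (elim exE conjE)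
  fix q r :: "int poly" assume "degree q \<le> d" "\<forall>X. f X = poly q X" "degree r \<le> d" "\<forall>X. g X = poly r X"
  then show "\<exists>s. degree s \<le> d \<and> (\<forall>X. f X + g X = poly s X)"
    by (intro exI[of _ "q + r"]) (auto intro: order_trans[OF degree_add_le_max])
qed

lemma has_degree_le_mult: "has_degree_le a f \<Longrightarrow> has_degree_le b g \<Longrightarrow> has_degree_le (a + b) (\<lambda>X. f X * g X)"
  unfolding has_degree_le_def
proof (elim exE conjE)
  fix q r :: "int poly" assume "degree q \<le> a" "\<forall>X. f X = poly q X" "degree r \<le> b" "\<forall>X. g X = poly r X"
  then show "\<exists>s. degree s \<le> a + b \<and> (\<forall>X. f X * g X = poly s X)"
    by (intro exI[of _ "q * r"]) (auto intro: order_trans[OF degree_mult_le])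
qed

lemma has_degree_le_sum: "(\<And>i. i \<in> A \<Longrightarrow> has_degree_le d (f i)) \<Longrightarrow> has_degree_le d (\<lambda>X. \<Sum>i\<in>A. f i X)"
proof (induction A rule: infinite_finite_induct)
  case (infinite A) then show ?case by (simp add: has_degree_le_const)
next
  case empty then show ?case by (simp add: has_degree_le_const)
next
  case (insert x F) then show ?case by (simp add: has_degree_le_add)
qed

lemma has_degree_le_cube_basis_update: "has_degree_le (if k < length u then 1 else 0) (\<lambda>X. cube_basis i (u[k := X]))"
proof (induction u arbitrary: i k)
  case Nil then show ?case by (simp add: has_degree_le_const)
next
  case (Cons v us)
  show ?case
  proof (cases k)
    case 0
    have "has_degree_le (1 + 0) (\<lambda>X. (if odd i then X else 1 - X) * cube_basis (i div 2) us)"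
    proof (rule has_degree_le_mult)
      show "has_degree_le 1 (\<lambda>X. if odd i then X else 1 - X)"
        using has_degree_le_linear[of 1 0] has_degree_le_linear[of "-1" 1] by (cases "odd i") auto
    qed (rule has_degree_le_const)
    then show ?thesis using 0 by simp
  next
    case (Suc k')
    have "has_degree_le (0 + (if k' < length us then 1 else 0)) (\<lambda>X. (if odd i then v else 1 - v) * cube_basis (i div 2) (us[k' := X]))"
      by (rule has_degree_le_mult[OF has_degree_le_const Cons.IH])
    then show ?thesis using Suc by simp
  qed
qed

section \<open>The triangle polynomial\<close>

text \<open>In the notation of the header, \<open>mle l A\<close> is \<open>\<tilde>A\<close> and \<open>tri_poly l A\<close> is \<open>F\<close>, whose
  \<open>3l\<close> arguments are split into consecutive blocks \<open>x, y, z\<close>; \<open>tri_sum l A pre\<close> sums \<open>F\<close>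
  over all Boolean completions of the prefix \<open>pre\<close>.\<close>
definition mle :: "nat \<Rightarrow> (nat \<Rightarrow> nat \<Rightarrow> int) \<Rightarrow> int list \<Rightarrow> int list \<Rightarrow> int" where
  "mle l A x y = (\<Sum>i<2^l. \<Sum>j<2^l. A i j * cube_basis i x * cube_basis j y)"

definition tri_poly :: "nat \<Rightarrow> (nat \<Rightarrow> nat \<Rightarrow> int) \<Rightarrow> int list \<Rightarrow> int" where
  "tri_poly l A z = mle l A (take l z) (take l (drop l z)) * mle l A (take l (drop l z)) (drop (2*l) z)
      * mle l A (take l z) (drop (2*l) z)"

definition tri_sum :: "nat \<Rightarrow> (nat \<Rightarrow> nat \<Rightarrow> int) \<Rightarrow> int list \<Rightarrow> int" where
  "tri_sum l A pre = (\<Sum>b\<in>cube (3 * l - length pre). tri_poly l A (pre @ b))"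

lemma mle_add: "mle l (\<lambda>i j. A i j + B i j) x y = mle l A x y + mle l B x y"
  unfolding mle_def by (simp add: sum.distrib algebra_simps)

lemma mle_zero: "mle l (\<lambda>i j. 0) x y = 0"
  unfolding mle_def by simp

lemma has_degree_le_mle_update: "has_degree_le ((if k1 < length u then 1 else 0) + (if k2 < length v then 1 else 0))
    (\<lambda>X. mle l A (u[k1:=X]) (v[k2:=X]))"
  unfolding mle_def
proof (intro has_degree_le_sum)
  fix i j
  have "has_degree_le ((0 + (if k1 < length u then 1 else 0)) + (if k2 < length v then 1 else 0))
     (\<lambda>X. A i j * cube_basis i (u[k1:=X]) * cube_basis j (v[k2:=X]))"
    by (intro has_degree_le_mult has_degree_le_const has_degree_le_cube_basis_update)
  then show "has_degree_le ((if k1 < length u then 1 else 0) + (if k2 < length v then 1 else 0))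
     (\<lambda>X. A i j * cube_basis i (u[k1:=X]) * cube_basis j (v[k2:=X]))" by simp
qed

lemma take_drop_update: "take l (drop l (z[k:=X])) = (take l (drop l z))[(if l \<le> k then k - l else l):=X]"
proof (cases "l \<le> k")
  case True then show ?thesis by (simp add: drop_update_swap take_update_swap)
next
  case False
  then have "take l (drop l (z[k:=X])) = take l (drop l z)" by simp
  also have "\<dots> = (take l (drop l z))[l:=X]" by (rule list_update_beyond[symmetric]) simp
  finally show ?thesis using False by simp
qed

lemma drop_update: "drop (2*l) (z[k:=X]) = (drop (2*l) z)[(if 2*l \<le> k then k - 2*l else length z):=X]"
proof (cases "2*l \<le> k")
  case True then show ?thesis by (simp add: drop_update_swap)
next
  case False
  then have "drop (2*l) (z[k:=X]) = drop (2*l) z" by simp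
  also have "\<dots> = (drop (2*l) z)[length z:=X]" by (rule list_update_beyond[symmetric]) simp
  finally show ?thesis using False by simp
qed

text \<open>Coordinate \<open>k\<close> lies in one of the blocks \<open>x, y, z\<close>; that block occurs in exactly two of the
  three factors of \<open>tri_poly\<close>, each of which is affine in any single coordinate.\<close>
lemma has_degree_le_tri_poly_update:
  assumes "length z = 3*l" "k < 3*l"
  shows "has_degree_le 2 (\<lambda>X. tri_poly l A (z[k:=X]))"
proof -
  let ?x = "take l z" and ?y = "take l (drop l z)" and ?w = "drop (2*l) z"
  let ?ky = "if l \<le> k then k - l else l" and ?kw = "if 2*l \<le> k then k - 2*l else length z"
  define ix where "ix = (if k < length ?x then 1 else 0 :: nat)"
  define iy where "iy = (if ?ky < length ?y then 1 else 0 :: nat)"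
  define iw where "iw = (if ?kw < length ?w then 1 else 0 :: nat)"
  have s: "ix + iy + iw \<le> 1" using assms unfolding ix_def iy_def iw_def by auto
  have "has_degree_le ((ix + iy) + (iy + iw) + (ix + iw))
     (\<lambda>X. mle l A (?x[k:=X]) (?y[?ky:=X]) * mle l A (?y[?ky:=X]) (?w[?kw:=X]) * mle l A (?x[k:=X]) (?w[?kw:=X]))"
    unfolding ix_def iy_def iw_def by (intro has_degree_le_mult has_degree_le_mle_update)
  then have "has_degree_le 2
     (\<lambda>X. mle l A (?x[k:=X]) (?y[?ky:=X]) * mle l A (?y[?ky:=X]) (?w[?kw:=X]) * mle l A (?x[k:=X]) (?w[?kw:=X]))"
    by (rule has_degree_le_mono) (use s in simp)
  then show ?thesis unfolding tri_poly_def take_update_swap take_drop_update drop_update .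
qed

lemma tri_sum_split:
  assumes "length pre < 3 * l"
  shows "tri_sum l A pre = tri_sum l A (pre @ [0]) + tri_sum l A (pre @ [1])"
proof -
  have e: "3 * l - length pre = Suc (3 * l - Suc (length pre))" using assms by simp
  show ?thesis unfolding tri_sum_def e sum_cube_Suc by (simp add: sum.distrib)
qed

lemma tri_sum_full: "length pre = 3 * l \<Longrightarrow> tri_sum l A pre = tri_poly l A pre"
  unfolding tri_sum_def by (simp add: cube_0)

lemma has_degree_le_tri_sum:
  assumes "length pre < 3 * l"
  shows "has_degree_le 2 (\<lambda>X. tri_sum l A (pre @ [X]))"
  unfolding tri_sum_def length_append_singleton
proof (intro has_degree_le_sum)
  fix b assume b: "b \<in> cube (3 * l - Suc (length pre))"
  have eq: "pre @ [X] @ b = (pre @ [0] @ b)[length pre := X]" for X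
    by (simp add: list_update_append)
  have "has_degree_le 2 (\<lambda>X. tri_poly l A ((pre @ [0] @ b)[length pre := X]))"
    using b assms by (intro has_degree_le_tri_poly_update) (auto simp: cube_def)
  moreover have "(\<lambda>X. tri_poly l A ((pre @ [X]) @ b)) = (\<lambda>X. tri_poly l A ((pre @ [0] @ b)[length pre := X]))"
    by (rule ext, subst append_assoc, subst eq, rule refl)
  ultimately show "has_degree_le 2 (\<lambda>X. tri_poly l A ((pre @ [X]) @ b))" by simp
qed

lemma mle_cube_point: "i < 2^l \<Longrightarrow> j < 2^l \<Longrightarrow> mle l A (cube_point l i) (cube_point l j) = A i j"
proof -
  assume ij: "i < 2^l" "j < 2^l"
  have sum_ind: "(\<Sum>j'<N. f j' * (if j' = j then 1 else 0)) = (\<Sum>j'<N. if j' = j then f j' else (0::int))"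
    for f :: "nat \<Rightarrow> int" and N j by (intro sum.cong) auto
  have "mle l A (cube_point l i) (cube_point l j) = (\<Sum>i'<2^l. \<Sum>j'<2^l. A i' j' * (if i' = i then 1 else 0) * (if j' = j then 1 else 0))"
    unfolding mle_def by (intro sum.cong refl) (simp add: cube_basis_cube_point ij)
  also have "\<dots> = (\<Sum>i'<2^l. if i' = i then (\<Sum>j'<2^l. if j' = j then A i' j' else 0) else 0)"
    by (intro sum.cong refl) (auto simp: sum_ind)
  also have "\<dots> = (\<Sum>j'<2^l. if j' = j then A i j' else 0)" using ij by (simp add: sum.delta sum_ind)
  also have "\<dots> = A i j" using ij by (subst sum.delta) auto
  finally show ?thesis .
qed

lemma tri_poly_append: "length x = l \<Longrightarrow> length y = l \<Longrightarrow> tri_poly l A (x @ y @ w) = mle l A x y * mle l A y w * mle l A x w"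
  by (simp add: tri_poly_def mult_2)

lemma tri_sum_Nil: "tri_sum l A [] = (\<Sum>i<2^l. \<Sum>j<2^l. \<Sum>k<2^l. A i j * A j k * A i k)"
proof -
  have e: "3 * l - length [] = l + (l + l)" by simp
  have "tri_sum l A [] = (\<Sum>b\<in>cube (l + (l + l)). tri_poly l A b)" unfolding tri_sum_def e by simp
  also have "\<dots> = (\<Sum>x\<in>cube l. \<Sum>y\<in>cube l. \<Sum>w\<in>cube l. tri_poly l A (x @ y @ w))"
    unfolding sum_cube_add ..
  also have "\<dots> = (\<Sum>x\<in>cube l. \<Sum>y\<in>cube l. \<Sum>w\<in>cube l. mle l A x y * mle l A y w * mle l A x w)"
    by (intro sum.cong refl) (simp add: tri_poly_append cube_def)
  also have "\<dots> = (\<Sum>i<2^l. \<Sum>j<2^l. \<Sum>k<2^l. mle l A (cube_point l i) (cube_point l j) * mle l A (cube_point l j) (cube_point l k) * mle l A (cube_point l i) (cube_point l k))"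
    unfolding sum_cube_reindex ..
  also have "\<dots> = (\<Sum>i<2^l. \<Sum>j<2^l. \<Sum>k<2^l. A i j * A j k * A i k)"
    by (intro sum.cong refl) (simp add: mle_cube_point)
  finally show ?thesis .
qed

section \<open>Quadratics modulo a prime\<close>

lemma not_dvd_diff_less: "x < p \<Longrightarrow> y < p \<Longrightarrow> x \<noteq> y \<Longrightarrow> \<not> int p dvd (int x - int y)" for x y p :: nat
proof
  assume a: "x < p" "y < p" "x \<noteq> y" and d: "int p dvd (int x - int y)"
  then have "int p dvd \<bar>int x - int y\<bar>" by simp
  moreover have "\<bar>int x - int y\<bar> > 0" using a by simp
  ultimately have "int p \<le> \<bar>int x - int y\<bar>" by (rule zdvd_imp_le)
  then show False using a by linarith
qed

lemma prime_dvd_coeffs_if_three_roots: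
  fixes p x y z :: nat and a b c :: int
  assumes p: "prime p" and xyz: "x < p" "y < p" "z < p" "x \<noteq> y" "y \<noteq> z" "x \<noteq> z"
    and r: "int p dvd a + b * int x + c * int x ^ 2" "int p dvd a + b * int y + c * int y ^ 2"
      "int p dvd a + b * int z + c * int z ^ 2"
  shows "int p dvd a \<and> int p dvd b \<and> int p dvd c"
proof -
  let ?P = "int p"
  have P: "prime ?P" using p by simp
  have k: "?P dvd b + c * (int u + int v)" if "u < p" "v < p" "u \<noteq> v"
     "?P dvd a + b * int u + c * int u ^ 2" "?P dvd a + b * int v + c * int v ^ 2" for u v
  proof -
    have "?P dvd (a + b * int u + c * int u ^ 2) - (a + b * int v + c * int v ^ 2)"
      using that by (intro dvd_diff)
    also have "(a + b * int u + c * int u ^ 2) - (a + b * int v + c * int v ^ 2) = (int u - int v) * (b + c * (int u + int v))"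
      by (simp add: algebra_simps power2_eq_square)
    finally have "?P dvd (int u - int v) * (b + c * (int u + int v))" .
    then show ?thesis using prime_dvd_mult_iff[OF P] not_dvd_diff_less[OF that(1-3)] by blast
  qed
  have k1: "?P dvd b + c * (int x + int y)" using k xyz r by blast
  have k2: "?P dvd b + c * (int x + int z)" using k xyz r by blast
  have "?P dvd (b + c * (int x + int y)) - (b + c * (int x + int z))" using k1 k2 by (rule dvd_diff)
  also have "(b + c * (int x + int y)) - (b + c * (int x + int z)) = (int y - int z) * c" by (simp add: algebra_simps)
  finally have "?P dvd c" using prime_dvd_mult_iff[OF P] not_dvd_diff_less[OF xyz(2,3,5)] by blast
  moreover have "?P dvd b"
  proof -
    have "?P dvd (b + c * (int x + int y)) - c * (int x + int y)" using k1 \<open>?P dvd c\<close> by (intro dvd_diff) auto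
    then show ?thesis by simp
  qed
  moreover have "?P dvd a"
  proof -
    have "?P dvd (a + b * int x + c * int x ^ 2) - b * int x - c * int x ^ 2"
      using r(1) \<open>?P dvd c\<close> \<open>?P dvd b\<close> by (intro dvd_diff) auto
    then show ?thesis by simp
  qed
  ultimately show ?thesis by blast
qed

lemma poly_degree_le_2: "degree (q::int poly) \<le> 2 \<Longrightarrow> poly q X = coeff q 0 + coeff q 1 * X + coeff q 2 * X ^ 2"
proof -
  assume d: "degree q \<le> 2"
  have "poly q X = (\<Sum>i\<le>degree q. coeff q i * X ^ i)" by (rule poly_altdef)
  also have "\<dots> = (\<Sum>i\<le>2. coeff q i * X ^ i)"
    by (rule sum.mono_neutral_left) (use d coeff_eq_0 in \<open>auto simp: le_degree\<close>)
  also have "\<dots> = coeff q 0 + coeff q 1 * X + coeff q 2 * X ^ 2"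
    by (simp add: numeral_2_eq_2)
  finally show ?thesis .
qed

lemma card_roots_quadratic_mod_prime:
  fixes p :: nat and q :: "int poly"
  assumes p: "prime p" and d: "degree q \<le> 2" and nz: "\<not> int p dvd poly q X0"
  shows "card {x. x < p \<and> int p dvd poly q (int x)} \<le> 2"
proof (rule ccontr)
  let ?S = "{x. x < p \<and> int p dvd poly q (int x)}"
  assume "\<not> ?thesis"
  then have c3: "card ?S \<ge> 3" by simp
  have fin: "finite ?S" by simp
  obtain x where x: "x \<in> ?S" using c3 by (metis card.empty ex_in_conv not_numeral_le_zero)
  have "card (?S - {x}) \<ge> 2" using c3 x fin by (simp add: card_Diff_singleton)
  then obtain y where y: "y \<in> ?S - {x}" by (metis card.empty ex_in_conv not_numeral_le_zero)
  have "card (?S - {x} - {y}) \<ge> 1" using c3 x y fin by (simp add: card_Diff_singleton)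
  then obtain z where z: "z \<in> ?S - {x} - {y}" by (metis card.empty ex_in_conv not_one_le_zero)
  have "int p dvd coeff q 0 \<and> int p dvd coeff q 1 \<and> int p dvd coeff q 2"
    by (rule prime_dvd_coeffs_if_three_roots[OF p, of x y z]) (use x y z poly_degree_le_2[OF d] in auto)
  then have "int p dvd poly q X0" unfolding poly_degree_le_2[OF d] by auto
  then show False using nz by simp
qed

lemma card_agree_mod_prime_le_2:
  fixes f g :: "int \<Rightarrow> int"
  assumes p: "prime p" and f: "has_degree_le 2 f" and g: "has_degree_le 2 g"
    and differ: "\<not> [f X0 = g X0] (mod int p)"
  shows "card {x. x < p \<and> [f (int x) = g (int x)] (mod int p)} \<le> 2"
proof -
  obtain qf qg :: "int poly" where q: "degree qf \<le> 2" "degree qg \<le> 2" "\<And>X. f X = poly qf X" "\<And>X. g X = poly qg X"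
    using f g unfolding has_degree_le_def by metis
  have deg: "degree (qf - qg) \<le> 2" using degree_diff_le[OF q(1,2)] .
  have cong_iff: "[f X = g X] (mod int p) \<longleftrightarrow> int p dvd poly (qf - qg) X" for X
    by (simp add: q(3,4) cong_iff_dvd_diff)
  show ?thesis
    unfolding cong_iff by (rule card_roots_quadratic_mod_prime[OF p deg]) (use differ cong_iff in blast)
qed

definition strings :: "nat \<Rightarrow> nat \<Rightarrow> nat list set" where
  "strings p m = {xs. set xs \<subseteq> {..<p} \<and> length xs = m}"

lemma finite_strings[simp]: "finite (strings p m)"
  unfolding strings_def by (rule finite_lists_length_eq) simp

lemma card_strings: "card (strings p m) = p ^ m"
  unfolding strings_def by (simp add: card_lists_length_eq)

lemma strings_Suc: "strings p (Suc m) = (\<lambda>(x, ys). x # ys) ` ({..<p} \<times> strings p m)"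
proof
  show "strings p (Suc m) \<subseteq> (\<lambda>(x, ys). x # ys) ` ({..<p} \<times> strings p m)"
  proof
    fix xs assume "xs \<in> strings p (Suc m)"
    then obtain x ys where "xs = x # ys" "x < p" "ys \<in> strings p m" unfolding strings_def by (cases xs) auto
    then show "xs \<in> (\<lambda>(x, ys). x # ys) ` ({..<p} \<times> strings p m)" by force
  qed
qed (auto simp: strings_def)

lemma sum_strings_Suc: "(\<Sum>xs\<in>strings p (Suc m). g xs) = (\<Sum>x<p. \<Sum>ys\<in>strings p m. g (x # ys))"
proof -
  have inj: "inj_on (\<lambda>(x, ys). x # ys) ({..<p} \<times> strings p m)" by (auto simp: inj_on_def)
  have "(\<Sum>xs\<in>strings p (Suc m). g xs) = (\<Sum>z\<in>{..<p} \<times> strings p m. g ((\<lambda>(x, ys). x # ys) z))"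
    unfolding strings_Suc using sum.reindex[OF inj, of g] by (simp add: o_def)
  also have "\<dots> = (\<Sum>x<p. \<Sum>ys\<in>strings p m. g (x # ys))"
    by (subst sum.cartesian_product) (simp add: case_prod_beta)
  finally show ?thesis .
qed

lemma strings_0: "strings p 0 = {[]}" by (auto simp: strings_def)

lemma sum_strings_3: "(\<Sum>xs\<in>strings p 3. g xs) = (\<Sum>i<p. \<Sum>j<p. \<Sum>k<p. g [i, j, k])"
  by (simp add: numeral_3_eq_3 sum_strings_Suc strings_0)

lemma card_strings_hit_prefix_le:
  fixes Bad :: "nat list \<Rightarrow> nat set"
  assumes "\<And>pre. card (Bad pre \<inter> {..<p}) \<le> b" and "i < m"
  shows "card {xs \<in> strings p m. xs ! i \<in> Bad (take i xs)} \<le> b * p ^ (m - 1)"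
  using assms
proof (induction m arbitrary: i Bad)
  case 0 then show ?case by simp
next
  case (Suc m)
  show ?case
  proof (cases i)
    case 0
    have "{xs \<in> strings p (Suc m). xs ! i \<in> Bad (take i xs)} \<subseteq> (\<lambda>(x, ys). x # ys) ` ((Bad [] \<inter> {..<p}) \<times> strings p m)"
      unfolding strings_Suc using 0 by auto
    then have "card {xs \<in> strings p (Suc m). xs ! i \<in> Bad (take i xs)} \<le> card ((\<lambda>(x, ys). x # ys) ` ((Bad [] \<inter> {..<p}) \<times> strings p m))"
      by (intro card_mono) auto
    also have "\<dots> \<le> card ((Bad [] \<inter> {..<p}) \<times> strings p m)" by (rule card_image_le) auto
    also have "\<dots> = card (Bad [] \<inter> {..<p}) * p ^ m" by (simp add: card_cartesian_product card_strings)
    also have "\<dots> \<le> b * p ^ m" using Suc.prems(1)[of "[]"] by simp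
    finally show ?thesis by simp
  next
    case (Suc i')
    with Suc.prems have i': "i' < m" by simp
    let ?B = "\<lambda>x pre. Bad (x # pre)"
    have "{xs \<in> strings p (Suc m). xs ! i \<in> Bad (take i xs)} \<subseteq> (\<Union>x\<in>{..<p}. Cons x ` {ys \<in> strings p m. ys ! i' \<in> ?B x (take i' ys)})"
      unfolding strings_Suc using Suc by auto
    then have "card {xs \<in> strings p (Suc m). xs ! i \<in> Bad (take i xs)} \<le> card (\<Union>x\<in>{..<p}. Cons x ` {ys \<in> strings p m. ys ! i' \<in> ?B x (take i' ys)})"
      by (intro card_mono) auto
    also have "\<dots> \<le> (\<Sum>x\<in>{..<p}. card (Cons x ` {ys \<in> strings p m. ys ! i' \<in> ?B x (take i' ys)}))"
      by (rule card_UN_le) simp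
    also have "\<dots> \<le> (\<Sum>x\<in>{..<p}. b * p ^ (m - 1))"
    proof (rule sum_mono)
      fix x
      have "card (Cons x ` {ys \<in> strings p m. ys ! i' \<in> ?B x (take i' ys)}) \<le> card {ys \<in> strings p m. ys ! i' \<in> ?B x (take i' ys)}"
        by (rule card_image_le) simp
      also have "\<dots> \<le> b * p ^ (m - 1)" using Suc.IH[of "?B x" i'] Suc.prems(1) i' by simp
      finally show "card (Cons x ` {ys \<in> strings p m. ys ! i' \<in> ?B x (take i' ys)}) \<le> b * p ^ (m - 1)" .
    qed
    also have "\<dots> = b * p ^ (Suc m - 1)" using i' by (cases m) auto
    finally show ?thesis .
  qed
qed

section \<open>The sum-check protocol\<close>

text \<open>An abstract run of the sum-check protocol on \<open>S\<close> with random point \<open>r\<close>: in round \<open>k\<close> the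
  prover sends the univariate function \<open>g (take k r)\<close>, meant to be \<open>\<lambda>X. S (take k r @ [X])\<close>;
  the verifier checks it against the current claim (initially \<open>c\<close>) and replaces the claim by its
  value at \<open>r ! k\<close>. The final claim is compared with \<open>v\<close>, the verifier's own value of \<open>S r\<close>.\<close>
definition sumcheck_claim :: "(int list \<Rightarrow> int \<Rightarrow> int) \<Rightarrow> int list \<Rightarrow> int \<Rightarrow> nat \<Rightarrow> int" where
  "sumcheck_claim g r c k = (if k = 0 then c else g (take (k - 1) r) (r ! (k - 1)))"

definition sumcheck_accepts :: "int \<Rightarrow> (int list \<Rightarrow> int \<Rightarrow> int) \<Rightarrow> int list \<Rightarrow> int \<Rightarrow> int \<Rightarrow> bool" where
  "sumcheck_accepts q g r c v \<longleftrightarrow>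
     (\<forall>k<length r. [sumcheck_claim g r c k = g (take k r) 0 + g (take k r) 1] (mod q)) \<and>
     [sumcheck_claim g r c (length r) = v] (mod q)"

text \<open>A false claim can only turn into a true one in a round where the prover's function is wrong
  but agrees with the true one at the random coordinate.\<close>
definition sumcheck_fooled :: "int \<Rightarrow> (int list \<Rightarrow> int \<Rightarrow> int) \<Rightarrow> (int list \<Rightarrow> int) \<Rightarrow> int list \<Rightarrow> bool" where
  "sumcheck_fooled q g S r \<longleftrightarrow> (\<exists>k<length r.
     (\<exists>X. \<not> [g (take k r) X = S (take k r @ [X])] (mod q)) \<and> [g (take k r) (r ! k) = S (take k r @ [r ! k])] (mod q))"

lemma sumcheck_claim_Suc: "sumcheck_claim g r c (Suc k) = g (take k r) (r ! k)"
  by (simp add: sumcheck_claim_def)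

lemma sumcheck_sound:
  assumes split: "\<And>pre. length pre < length r \<Longrightarrow> S pre = S (pre @ [0]) + S (pre @ [1])"
    and acc: "sumcheck_accepts q g r c v" and final: "[v = S r] (mod q)"
    and wrong: "\<not> [c = S []] (mod q)"
  shows "sumcheck_fooled q g S r"
proof (rule ccontr)
  assume no_bad: "\<not> ?thesis"
  have "\<not> [sumcheck_claim g r c k = S (take k r)] (mod q)" if "k \<le> length r" for k
    using that
  proof (induction k)
    case 0
    then show ?case using wrong by (simp add: sumcheck_claim_def)
  next
    case (Suc k)
    let ?pre = "take k r"
    have k: "k < length r" using Suc.prems by simp
    have "\<not> (\<forall>X. [g ?pre X = S (?pre @ [X])] (mod q))"
    proof
      assume agree: "\<forall>X. [g ?pre X = S (?pre @ [X])] (mod q)"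
      have "[sumcheck_claim g r c k = g ?pre 0 + g ?pre 1] (mod q)"
        using acc k by (simp add: sumcheck_accepts_def)
      also have "[g ?pre 0 + g ?pre 1 = S (?pre @ [0]) + S (?pre @ [1])] (mod q)"
        using agree by (intro cong_add) auto
      also have "S (?pre @ [0]) + S (?pre @ [1]) = S ?pre"
        using split[of ?pre] k by simp
      finally show False using Suc.IH k by simp
    qed
    then have "\<not> [g ?pre (r ! k) = S (?pre @ [r ! k])] (mod q)" using no_bad k by (auto simp: sumcheck_fooled_def)
    then show ?case using k by (simp add: sumcheck_claim_Suc take_Suc_conv_app_nth)
  qed
  from this[of "length r"] have "\<not> [sumcheck_claim g r c (length r) = S r] (mod q)" by simp
  moreover have "[sumcheck_claim g r c (length r) = S r] (mod q)"
    using acc final unfolding sumcheck_accepts_def by (blast intro: cong_trans)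
  ultimately show False by simp
qed

lemma sumcheck_complete:
  assumes split: "\<And>pre. length pre < length r \<Longrightarrow> S pre = S (pre @ [0]) + S (pre @ [1])"
    and honest: "\<And>k X. k < length r \<Longrightarrow> [g (take k r) X = S (take k r @ [X])] (mod q)"
    and start: "[c = S []] (mod q)" and final: "[v = S r] (mod q)"
  shows "sumcheck_accepts q g r c v"
proof -
  have claim: "[sumcheck_claim g r c k = S (take k r)] (mod q)" if "k \<le> length r" for k
  proof (cases k)
    case 0
    then show ?thesis using start by (simp add: sumcheck_claim_def)
  next
    case (Suc k')
    then show ?thesis
      using honest[of k' "r ! k'"] that by (simp add: sumcheck_claim_Suc take_Suc_conv_app_nth)
  qed
  have "[sumcheck_claim g r c k = g (take k r) 0 + g (take k r) 1] (mod q)" if k: "k < length r" for k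
  proof -
    have "[sumcheck_claim g r c k = S (take k r)] (mod q)" using claim k by simp
    also have "S (take k r) = S (take k r @ [0]) + S (take k r @ [1])" using split k by simp
    also have "[\<dots> = g (take k r) 0 + g (take k r) 1] (mod q)"
      using honest k by (intro cong_add) (auto simp: cong_sym)
    finally show ?thesis .
  qed
  moreover have "[sumcheck_claim g r c (length r) = v] (mod q)"
    using claim[of "length r"] final by (auto intro: cong_trans simp: cong_sym_eq)
  ultimately show ?thesis by (simp add: sumcheck_accepts_def)
qed

lemma card_sumcheck_fooled_le:
  fixes g :: "int list \<Rightarrow> int \<Rightarrow> int" and S :: "int list \<Rightarrow> int"
  assumes p: "prime p"
    and deg_g: "\<And>pre. length pre < m \<Longrightarrow> has_degree_le 2 (g pre)"
    and deg_S: "\<And>pre. length pre < m \<Longrightarrow> has_degree_le 2 (\<lambda>X. S (pre @ [X]))"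
  shows "card {r \<in> strings p m. sumcheck_fooled (int p) g S (map int r)} \<le> m * (2 * p ^ (m - 1))"
    (is "card ?F \<le> _")
proof -
  define Bad where "Bad pre = (if length pre < m \<and>
      (\<exists>X. \<not> [g (map int pre) X = S (map int pre @ [X])] (mod int p))
    then {x. x < p \<and> [g (map int pre) (int x) = S (map int pre @ [int x])] (mod int p)} else {})" for pre
  have card_Bad: "card (Bad pre \<inter> {..<p}) \<le> 2" for pre
  proof (cases "length pre < m \<and> (\<exists>X. \<not> [g (map int pre) X = S (map int pre @ [X])] (mod int p))")
    case True
    then obtain X0 where X0: "\<not> [g (map int pre) X0 = S (map int pre @ [X0])] (mod int p)" by blast
    have "Bad pre \<inter> {..<p} = {x. x < p \<and> [g (map int pre) (int x) = S (map int pre @ [int x])] (mod int p)}"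
      using True by (auto simp: Bad_def)
    then show ?thesis
      using card_agree_mod_prime_le_2[OF p deg_g deg_S X0] True by simp
  next
    case False
    then have "Bad pre = {}" unfolding Bad_def by (rule if_not_P)
    then show ?thesis by simp
  qed
  have "?F \<subseteq> (\<Union>k<m. {r \<in> strings p m. r ! k \<in> Bad (take k r)})"
  proof
    fix r assume "r \<in> ?F"
    then have r: "r \<in> strings p m" and len: "length (map int r) = m"
      and "sumcheck_fooled (int p) g S (map int r)" by (auto simp: strings_def)
    then obtain k where k: "k < m" and fooled:
      "\<exists>X. \<not> [g (take k (map int r)) X = S (take k (map int r) @ [X])] (mod int p)"
      "[g (take k (map int r)) (map int r ! k) = S (take k (map int r) @ [map int r ! k])] (mod int p)"
      unfolding sumcheck_fooled_def by blast
    have "r ! k < p" using r k by (auto simp: strings_def dest!: nth_mem)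
    then show "r \<in> (\<Union>k<m. {r \<in> strings p m. r ! k \<in> Bad (take k r)})"
      using r k len fooled by (auto simp: Bad_def take_map)
  qed
  then have "card ?F \<le> card (\<Union>k<m. {r \<in> strings p m. r ! k \<in> Bad (take k r)})"
    by (intro card_mono) auto
  also have "\<dots> \<le> (\<Sum>k<m. card {r \<in> strings p m. r ! k \<in> Bad (take k r)})"
    by (rule card_UN_le) simp
  also have "\<dots> \<le> (\<Sum>k<m. 2 * p ^ (m - 1))"
    by (intro sum_mono card_strings_hit_prefix_le card_Bad) simp
  finally show ?thesis by simp
qed

section \<open>Counting triangles in the stream graph\<close>

definition edge_delta :: "update \<Rightarrow> nat \<Rightarrow> nat \<Rightarrow> int" where
  "edge_delta u i j = (case u of (a, b, d) \<Rightarrow> if {a, b} = {i, j} then d else 0)"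

lemma mult_snoc: "mult (\<tau> @ [u]) = (\<lambda>i j. mult \<tau> i j + edge_delta u i j)"
  by (simp add: fun_eq_iff mult_def edge_delta_def)

lemma mult_sym: "mult \<tau> i j = mult \<tau> j i"
  by (simp add: mult_def insert_commute)

lemma mult_zero:
  assumes "\<And>a b d. (a, b, d) \<in> set \<tau> \<Longrightarrow> {a, b} \<noteq> {i, j}"
  shows "mult \<tau> i j = 0"
proof -
  have zeros: "map (\<lambda>(a, b, d). if {a, b} = {i, j} then d else 0) \<tau> = map (\<lambda>_. 0) \<tau>"
    using assms by (intro map_cong) auto
  show ?thesis unfolding mult_def zeros by simp
qed

lemma mult_nonzero_imp_edge:
  assumes v: "valid_stream n \<tau>" and nz: "mult \<tau> i j \<noteq> 0"
  shows "i < n \<and> j < n \<and> i \<noteq> j"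
proof (rule ccontr)
  assume bad: "\<not> ?thesis"
  have "mult \<tau> i j = 0"
  proof (rule mult_zero)
    fix a b d assume ab: "(a, b, d) \<in> set \<tau>"
    then have "a < n" "b < n" "a \<noteq> b" using v unfolding valid_stream_def by auto
    then show "{a, b} \<noteq> {i, j}" using bad by (auto simp: doubleton_eq_iff)
  qed
  then show False using nz by simp
qed

lemma mult_0_or_1: "valid_stream n \<tau> \<Longrightarrow> mult \<tau> i j = 0 \<or> mult \<tau> i j = 1"
proof -
  assume v: "valid_stream n \<tau>"
  show ?thesis
  proof (cases "mult \<tau> i j = 0")
    case False
    then have "i < n \<and> j < n \<and> i \<noteq> j" using mult_nonzero_imp_edge[OF v] by blast
    then show ?thesis using v unfolding valid_stream_def by blast
  qed simp
qed

definition triangle_sets :: "nat \<Rightarrow> update list \<Rightarrow> nat set set" where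
  "triangle_sets n \<tau> = {T. T \<subseteq> {..<n} \<and> card T = 3 \<and> (\<forall>x\<in>T. \<forall>y\<in>T. x \<noteq> y \<longrightarrow> mult \<tau> x y = 1)}"

lemma finite_triangle_sets: "finite (triangle_sets n \<tau>)"
  by (rule finite_subset[of _ "Pow {..<n}"]) (auto simp: triangle_sets_def)

lemma card_triangle_lists: "card {xs. distinct xs \<and> set xs \<in> triangle_sets n \<tau>} = 6 * card (triangle_sets n \<tau>)"
proof -
  have eq: "{xs. distinct xs \<and> set xs \<in> triangle_sets n \<tau>} = (\<Union>T\<in>triangle_sets n \<tau>. permutations_of_set T)"
    by (auto simp: permutations_of_set_def)
  have "card (\<Union>T\<in>triangle_sets n \<tau>. permutations_of_set T) = (\<Sum>T\<in>triangle_sets n \<tau>. card (permutations_of_set T))"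
    by (rule card_UN_disjoint) (auto simp: finite_triangle_sets dest: permutations_of_setD)
  also have "\<dots> = (\<Sum>T\<in>triangle_sets n \<tau>. 6)"
  proof (rule sum.cong)
    fix T assume "T \<in> triangle_sets n \<tau>"
    then have "card T = 3" "finite T" by (auto simp: triangle_sets_def intro: finite_subset)
    then show "card (permutations_of_set T) = 6" by (simp add: numeral_3_eq_3)
  qed simp
  finally show ?thesis using eq by simp
qed

lemma mult_triangle_iff:
  assumes v: "valid_stream n \<tau>"
  shows "(mult \<tau> i j = 1 \<and> mult \<tau> j k = 1 \<and> mult \<tau> i k = 1) \<longleftrightarrow> (distinct [i, j, k] \<and> set [i, j, k] \<in> triangle_sets n \<tau>)"
proof
  assume g: "mult \<tau> i j = 1 \<and> mult \<tau> j k = 1 \<and> mult \<tau> i k = 1"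
  then have a: "i < n \<and> j < n \<and> i \<noteq> j" "j < n \<and> k < n \<and> j \<noteq> k" "i < n \<and> k < n \<and> i \<noteq> k"
    using mult_nonzero_imp_edge[OF v] by (metis zero_neq_one)+
  have g': "mult \<tau> j i = 1" "mult \<tau> k j = 1" "mult \<tau> k i = 1" using g mult_sym by metis+
  show "distinct [i, j, k] \<and> set [i, j, k] \<in> triangle_sets n \<tau>"
    using a g g' by (auto simp: triangle_sets_def card_insert_if)
next
  assume "distinct [i, j, k] \<and> set [i, j, k] \<in> triangle_sets n \<tau>"
  then show "mult \<tau> i j = 1 \<and> mult \<tau> j k = 1 \<and> mult \<tau> i k = 1" by (auto simp: triangle_sets_def)
qed

lemma triangles_eq_card: "triangles n \<tau> = card (triangle_sets n \<tau>)"
  by (simp add: triangles_def triangle_sets_def)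

lemma sum_adjacency_triangles:
  assumes v: "valid_stream n \<tau>" and nN: "n \<le> N"
  shows "(\<Sum>i<N. \<Sum>j<N. \<Sum>k<N. mult \<tau> i j * mult \<tau> j k * mult \<tau> i k) = 6 * int (triangles n \<tau>)"
proof -
  let ?L = "{xs. distinct xs \<and> set xs \<in> triangle_sets n \<tau>}"
  let ?g = "\<lambda>xs. if distinct xs \<and> set xs \<in> triangle_sets n \<tau> then 1 else (0::int)"
  have t: "mult \<tau> i j * mult \<tau> j k * mult \<tau> i k = ?g [i, j, k]" for i j k
  proof -
    have "mult \<tau> i j * mult \<tau> j k * mult \<tau> i k = (if mult \<tau> i j = 1 \<and> mult \<tau> j k = 1 \<and> mult \<tau> i k = 1 then 1 else 0)"
      using mult_0_or_1[OF v, of i j] mult_0_or_1[OF v, of j k] mult_0_or_1[OF v, of i k] by auto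
    then show ?thesis using mult_triangle_iff[OF v] by simp
  qed
  have "(\<Sum>i<N. \<Sum>j<N. \<Sum>k<N. mult \<tau> i j * mult \<tau> j k * mult \<tau> i k) = (\<Sum>xs\<in>strings N 3. ?g xs)"
    unfolding sum_strings_3 t ..
  also have "\<dots> = int (card {xs \<in> strings N 3. distinct xs \<and> set xs \<in> triangle_sets n \<tau>})"
    by (simp add: sum.If_cases Int_def)
  also have "{xs \<in> strings N 3. distinct xs \<and> set xs \<in> triangle_sets n \<tau>} = ?L"
  proof -
    have "xs \<in> strings N 3" if "distinct xs" "set xs \<in> triangle_sets n \<tau>" for xs
    proof -
      have "card (set xs) = 3" "set xs \<subseteq> {..<n}" using that by (auto simp: triangle_sets_def)
      then show ?thesis using that nN distinct_card[of xs] by (auto simp: strings_def)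
    qed
    then show ?thesis by auto
  qed
  finally show ?thesis using card_triangle_lists triangles_eq_card by simp
qed

lemma triangles_le:
  assumes v: "valid_stream n \<tau>"
  shows "6 * triangles n \<tau> \<le> n ^ 3"
proof -
  have "{xs. distinct xs \<and> set xs \<in> triangle_sets n \<tau>} \<subseteq> strings n 3"
  proof
    fix xs assume "xs \<in> {xs. distinct xs \<and> set xs \<in> triangle_sets n \<tau>}"
    then have "distinct xs" "card (set xs) = 3" "set xs \<subseteq> {..<n}" by (auto simp: triangle_sets_def)
    then show "xs \<in> strings n 3" using distinct_card[of xs] by (auto simp: strings_def)
  qed
  then have "card {xs. distinct xs \<and> set xs \<in> triangle_sets n \<tau>} \<le> card (strings n 3)" by (intro card_mono) auto
  then show ?thesis using card_triangle_lists triangles_eq_card card_strings by simp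
qed

lemma horner_sum_digit:
  fixes p :: nat
  assumes "\<forall>x\<in>set xs. x < p" and "k < length xs"
  shows "horner_sum id p xs div p ^ k mod p = xs ! k"
  using assms
proof (induction xs arbitrary: k)
  case (Cons x xs)
  have p0: "0 < p" using Cons.prems by auto
  show ?case
  proof (cases k)
    case (Suc k')
    have "horner_sum id p (x # xs) div p ^ Suc k' = horner_sum id p (x # xs) div p div p ^ k'"
      by (simp only: power_Suc div_mult2_eq)
    also have "horner_sum id p (x # xs) div p = horner_sum id p xs" using Cons.prems p0 by (simp add: id_def)
    finally show ?thesis using Cons Suc by (simp add: id_def)
  qed (use Cons.prems in \<open>simp add: id_def\<close>)
qed simp

lemma horner_sum_less_power:
  fixes p :: nat
  assumes "\<forall>x\<in>set xs. x < p"
  shows "horner_sum id p xs < p ^ length xs"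
  using assms
proof (induction xs)
  case (Cons x xs)
  then have "p * (horner_sum id p xs + 1) \<le> p * p ^ length xs" by (intro mult_le_mono2) (simp add: id_def)
  then show ?case using Cons.prems by (simp add: algebra_simps id_def)
qed simp

definition digits :: "nat \<Rightarrow> nat \<Rightarrow> nat \<Rightarrow> nat list" where
  "digits p L s = map (\<lambda>k. s div p ^ k mod p) [0..<L]"

lemma digits_horner_sum: "\<forall>x\<in>set xs. x < p \<Longrightarrow> digits p (length xs) (horner_sum id p xs) = xs"
  unfolding digits_def by (rule nth_equalityI) (auto simp: horner_sum_digit)

definition bits :: "nat \<Rightarrow> nat \<Rightarrow> bool list" where
  "bits w x = map (bit x) [0..<w]"

lemma length_bits [simp]: "length (bits w x) = w"
  by (simp add: bits_def)

lemma horner_sum_bits: "x < 2 ^ w \<Longrightarrow> horner_sum of_bool 2 (bits w x) = x"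
  by (simp add: bits_def horner_sum_bit_eq_take_bit take_bit_nat_eq_self)

record vstate =
  accepting :: bool
  answer :: nat
  claim :: nat
  val_xy :: nat
  val_yz :: nat
  val_xz :: nat
  point :: "nat list"

definition state_digits :: "vstate \<Rightarrow> nat list" where
  "state_digits st = of_bool (accepting st) # answer st # claim st # val_xy st # val_yz st # val_xz st # point st"

definition state_of_digits :: "nat list \<Rightarrow> vstate" where
  "state_of_digits xs = \<lparr>accepting = (xs ! 0 \<noteq> 0), answer = xs ! 1, claim = xs ! 2,
     val_xy = xs ! 3, val_yz = xs ! 4, val_xz = xs ! 5, point = drop 6 xs\<rparr>"

lemma state_of_digits_inverse: "state_of_digits (state_digits st) = st"
  by (simp add: state_of_digits_def state_digits_def)

section \<open>The verifier\<close>

locale triangle_sip =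
  fixes l p w :: nat
  assumes prime_p: "prime p" and p_le_pow: "p \<le> 2 ^ w" and l_pos: "0 < l"
begin

abbreviation dim :: nat where "dim \<equiv> 3 * l"

lemma p_pos: "0 < p"
  using prime_p prime_gt_0_nat by blast

definition wf_state :: "vstate \<Rightarrow> bool" where
  "wf_state st \<longleftrightarrow> answer st < p \<and> claim st < p \<and> val_xy st < p \<and> val_yz st < p \<and> val_xz st < p
     \<and> point st \<in> strings p dim"

text \<open>A well-formed state consists of \<open>dim + 6\<close> numbers below \<open>p\<close>; it is stored through its
  base-\<open>p\<close> digits, i.e.\ in \<open>w (dim + 6)\<close> bits.\<close>
definition encode :: "vstate \<Rightarrow> nat" where
  "encode st = horner_sum id p (state_digits st)"

definition decode :: "nat \<Rightarrow> vstate" where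
  "decode s = state_of_digits (digits p (dim + 6) s)"

lemma state_digits_less: "wf_state st \<Longrightarrow> \<forall>x\<in>set (state_digits st). x < p"
  using prime_gt_1_nat[OF prime_p] by (auto simp: wf_state_def state_digits_def strings_def)

lemma length_state_digits: "wf_state st \<Longrightarrow> length (state_digits st) = dim + 6"
  by (simp add: wf_state_def state_digits_def strings_def)

lemma decode_encode: "wf_state st \<Longrightarrow> decode (encode st) = st"
  unfolding decode_def encode_def
  by (metis digits_horner_sum state_digits_less length_state_digits state_of_digits_inverse)

lemma wf_decode: "wf_state (decode s)"
proof -
  let ?xs = "digits p (dim + 6) s"
  have lt: "\<forall>x\<in>set ?xs. x < p" and len: "length ?xs = dim + 6"
    using p_pos by (auto simp: digits_def)
  then have "drop 6 ?xs \<in> strings p dim" by (auto simp: strings_def dest: in_set_dropD)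
  moreover have "?xs ! k < p" if "k < dim + 6" for k using lt len that by auto
  ultimately show ?thesis unfolding decode_def wf_state_def state_of_digits_def by simp
qed

lemma encode_less: "wf_state st \<Longrightarrow> encode st < 2 ^ (w * (dim + 6))"
proof -
  assume "wf_state st"
  then have "encode st < p ^ (dim + 6)"
    unfolding encode_def by (metis horner_sum_less_power state_digits_less length_state_digits)
  also have "\<dots> \<le> (2 ^ w) ^ (dim + 6)" using p_le_pow by (intro power_mono) auto
  finally show ?thesis by (simp add: power_mult)
qed

definition residue :: "int \<Rightarrow> nat" where
  "residue z = nat (z mod int p)"

lemma residue_less: "residue z < p"
  using p_pos unfolding residue_def by (simp add: nat_less_iff)

lemma int_residue: "int (residue z) = z mod int p"
  using p_pos unfolding residue_def by simp

definition point_x :: "nat list \<Rightarrow> int list" where "point_x r = map int (take l r)"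
definition point_y :: "nat list \<Rightarrow> int list" where "point_y r = map int (take l (drop l r))"
definition point_z :: "nat list \<Rightarrow> int list" where "point_z r = map int (drop (2 * l) r)"

definition init_state :: "nat list \<Rightarrow> vstate" where
  "init_state r = \<lparr>accepting = True, answer = 0, claim = 0, val_xy = 0, val_yz = 0, val_xz = 0, point = r\<rparr>"

text \<open>While the stream passes, the verifier maintains, modulo \<open>p\<close>, the three values of the
  multilinear extension of the adjacency matrix needed to evaluate \<open>tri_poly\<close> at its secret
  random point; each update changes them linearly.\<close>
definition stream_step :: "vstate \<Rightarrow> update \<Rightarrow> vstate" where
  "stream_step st u = st\<lparr>
     val_xy := residue (int (val_xy st) + mle l (edge_delta u) (point_x (point st)) (point_y (point st))),
     val_yz := residue (int (val_yz st) + mle l (edge_delta u) (point_y (point st)) (point_z (point st))),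
     val_xz := residue (int (val_xz st) + mle l (edge_delta u) (point_x (point st)) (point_z (point st)))\<rparr>"

definition query :: "nat \<Rightarrow> nat list \<Rightarrow> bool list" where
  "query i r = bits w (if i = 0 then 0 else r ! (i - 1))"

definition digit :: "bool list \<Rightarrow> nat \<Rightarrow> nat" where
  "digit a k = horner_sum of_bool 2 a div p ^ k mod p"

text \<open>Round \<open>i < dim\<close> of the sum-check: the prover's reply carries, as base-\<open>p\<close> digits, the
  coefficients of the quadratic for variable \<open>i\<close> and (read in round 0 only) the claimed number
  of triangles; the query of round \<open>i\<close> reveals the random coordinate \<open>r ! (i - 1)\<close> of the
  previous round.\<close>
definition receive :: "nat \<Rightarrow> vstate \<Rightarrow> bool list \<Rightarrow> vstate" where
  "receive i st a = (if i < dim then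
       st\<lparr>accepting := accepting st \<and>
            (2 * digit a 0 + digit a 1 + digit a 2) mod p = (if i = 0 then 6 * digit a 3 mod p else claim st),
          answer := (if i = 0 then digit a 3 else answer st),
          claim := (digit a 0 + digit a 1 * point st ! i + digit a 2 * (point st ! i)^2) mod p\<rparr>
     else if i = dim then st\<lparr>accepting := accepting st \<and> claim st = val_xy st * val_yz st * val_xz st mod p\<rparr>
     else st)"

definition verifier :: sip_verifier where
  "verifier = \<lparr>v_init = map_pmf (\<lambda>r. encode (init_state r)) (pmf_of_set (strings p dim)),
        v_step = (\<lambda>s u. return_pmf (encode (stream_step (decode s) u))),
        v_query = (\<lambda>i s. return_pmf (query i (point (decode s)), s)),
        v_receive = (\<lambda>i s a. return_pmf (encode (receive i (decode s) a))),
        v_out = (\<lambda>s. if accepting (decode s) then Some (answer (decode s)) else None),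
        v_rounds = dim + 1\<rparr>"

lemma wf_stream_step: "wf_state st \<Longrightarrow> wf_state (stream_step st u)"
  by (simp add: wf_state_def stream_step_def residue_less)

lemma digit_less: "digit a k < p"
  using p_pos by (simp add: digit_def)

lemma wf_receive: "wf_state st \<Longrightarrow> wf_state (receive i st a)"
  using p_pos digit_less unfolding wf_state_def receive_def by auto

lemma wf_init_state: "r \<in> strings p dim \<Longrightarrow> wf_state (init_state r)"
  using p_pos by (simp add: wf_state_def init_state_def)

lemma wf_stream_state: "r \<in> strings p dim \<Longrightarrow> wf_state (foldl stream_step (init_state r) \<tau>)"
proof -
  have "wf_state st \<Longrightarrow> wf_state (foldl stream_step st \<tau>)" for st
    by (induction \<tau> arbitrary: st) (auto simp: wf_stream_step)
  then show "r \<in> strings p dim \<Longrightarrow> ?thesis" using wf_init_state by blast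
qed

lemma strings_nonempty: "strings p dim \<noteq> {}"
proof -
  have "replicate dim 0 \<in> strings p dim" using p_pos by (auto simp: strings_def)
  then show ?thesis by blast
qed

lemma set_pmf_strings [simp]: "set_pmf (pmf_of_set (strings p dim)) = strings p dim"
  using strings_nonempty by simp

lemma space_bounded_verifier: "space_bounded (w * (dim + 6)) verifier"
  unfolding space_bounded_def
  by (auto simp: verifier_def intro!: encode_less wf_init_state wf_stream_step wf_receive wf_decode)

lemma stream_run_verifier:
  "stream_run verifier \<tau> = map_pmf (\<lambda>r. encode (foldl stream_step (init_state r) \<tau>)) (pmf_of_set (strings p dim))"
proof -
  have "(\<forall>r\<in>strings p dim. wf_state (f r)) \<Longrightarrow>
      foldl (\<lambda>q u. bind_pmf q (\<lambda>s. v_step verifier s u)) (map_pmf (\<lambda>r. encode (f r)) (pmf_of_set (strings p dim))) \<tau>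
      = map_pmf (\<lambda>r. encode (foldl stream_step (f r) \<tau>)) (pmf_of_set (strings p dim))" for f
  proof (induction \<tau> arbitrary: f)
    case (Cons u \<tau>)
    have "bind_pmf (map_pmf (\<lambda>r. encode (f r)) (pmf_of_set (strings p dim))) (\<lambda>s. v_step verifier s u)
        = map_pmf (\<lambda>r. encode (stream_step (f r) u)) (pmf_of_set (strings p dim))"
      unfolding map_pmf_def bind_assoc_pmf bind_return_pmf
      by (rule bind_pmf_cong) (use Cons.prems in \<open>auto simp: verifier_def decode_encode\<close>)
    then show ?case using Cons.IH[of "\<lambda>r. stream_step (f r) u"] Cons.prems wf_stream_step by simp
  qed simp
  then show ?thesis unfolding stream_run_def using wf_init_state by (simp add: verifier_def)
qed

fun interaction :: "prover \<Rightarrow> nat \<Rightarrow> vstate \<Rightarrow> (bool list \<times> bool list) list \<Rightarrow> vstate \<times> (bool list \<times> bool list) list" where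
  "interaction P 0 st tr = (st, tr)"
| "interaction P (Suc k) st tr =
     (let q = query (length tr) (point st); a = P (map fst tr @ [q])
      in interaction P k (receive (length tr) st a) (tr @ [(q, a)]))"

lemma wf_interaction: "wf_state st \<Longrightarrow> wf_state (fst (interaction P k st tr))"
  by (induction k arbitrary: st tr) (auto simp: wf_receive Let_def)

lemma interact_verifier:
  "wf_state st \<Longrightarrow> interact verifier P k (encode st) tr = return_pmf (map_prod encode id (interaction P k st tr))"
proof (induction k arbitrary: st tr)
  case (Suc k)
  show ?case using Suc.prems Suc.IH[OF wf_receive[OF Suc.prems]]
    by (simp add: verifier_def decode_encode bind_return_pmf Let_def)
qed simp

lemma run_verifier_interaction:
  "run verifier P \<tau> = map_pmf (\<lambda>r. case interaction P (dim + 1) (foldl stream_step (init_state r) \<tau>) [] of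
       (st, tr) \<Rightarrow> (if accepting st then Some (answer st) else None, tr)) (pmf_of_set (strings p dim))"
proof -
  let ?S = "\<lambda>r. foldl stream_step (init_state r) \<tau>"
  let ?F = "\<lambda>(s, tr). (v_out verifier s, tr)"
  let ?D = "pmf_of_set (strings p dim)"
  have "run verifier P \<tau> = map_pmf ?F (bind_pmf ?D (\<lambda>r. interact verifier P (dim + 1) (encode (?S r)) []))"
    unfolding run_def stream_run_verifier by (simp add: verifier_def bind_map_pmf)
  also have "\<dots> = map_pmf ?F (bind_pmf ?D (\<lambda>r. return_pmf (map_prod encode id (interaction P (dim + 1) (?S r) []))))"
    by (intro arg_cong[where f="map_pmf ?F"] bind_pmf_cong refl interact_verifier)
      (simp add: wf_stream_state)
  also have "\<dots> = map_pmf (\<lambda>r. ?F (map_prod encode id (interaction P (dim + 1) (?S r) []))) ?D"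
    by (simp add: map_pmf_def[symmetric] map_pmf_comp)
  also have "\<dots> = map_pmf (\<lambda>r. case interaction P (dim + 1) (?S r) [] of
       (st, tr) \<Rightarrow> (if accepting st then Some (answer st) else None, tr)) ?D"
  proof (rule map_pmf_cong[OF refl])
    fix r assume "r \<in> set_pmf ?D"
    then have "wf_state (fst (interaction P (dim + 1) (?S r) []))"
      by (intro wf_interaction wf_stream_state) simp
    then show "?F (map_prod encode id (interaction P (dim + 1) (?S r) [])) = (case interaction P (dim + 1) (?S r) [] of
       (st, tr) \<Rightarrow> (if accepting st then Some (answer st) else None, tr))"
      by (cases "interaction P (dim + 1) (?S r) []") (simp add: verifier_def decode_encode)
  qed
  finally show ?thesis .
qed

lemma stream_state:
  "point (foldl stream_step (init_state r) \<tau>) = r \<and> accepting (foldl stream_step (init_state r) \<tau>)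
   \<and> int (val_xy (foldl stream_step (init_state r) \<tau>)) = mle l (mult \<tau>) (point_x r) (point_y r) mod int p
   \<and> int (val_yz (foldl stream_step (init_state r) \<tau>)) = mle l (mult \<tau>) (point_y r) (point_z r) mod int p
   \<and> int (val_xz (foldl stream_step (init_state r) \<tau>)) = mle l (mult \<tau>) (point_x r) (point_z r) mod int p"
proof (induction \<tau> rule: rev_induct)
  case Nil
  have "mult [] = (\<lambda>i j. 0)" by (simp add: fun_eq_iff mult_def)
  then show ?case by (simp add: init_state_def mle_zero)
next
  case (snoc u \<tau>)
  then show ?case
    by (simp add: stream_step_def int_residue mult_snoc mle_add mod_add_left_eq)
qed

lemma streamed_product_cong:
  fixes \<tau> :: "update list"
  assumes "r \<in> strings p dim"
  defines "st \<equiv> foldl stream_step (init_state r) \<tau>"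
  shows "[int (val_xy st * val_yz st * val_xz st) = tri_sum l (mult \<tau>) (map int r)] (mod int p)"
proof -
  have "[int (val_xy st * val_yz st * val_xz st) = mle l (mult \<tau>) (point_x r) (point_y r)
      * mle l (mult \<tau>) (point_y r) (point_z r) * mle l (mult \<tau>) (point_x r) (point_z r)] (mod int p)"
    unfolding of_nat_mult using stream_state[of r \<tau>]
    by (intro cong_mult) (simp_all add: st_def cong_def)
  also have "mle l (mult \<tau>) (point_x r) (point_y r) * mle l (mult \<tau>) (point_y r) (point_z r)
      * mle l (mult \<tau>) (point_x r) (point_z r) = tri_poly l (mult \<tau>) (map int r)"
    by (simp add: tri_poly_def point_x_def point_y_def point_z_def take_map drop_map)
  also have "\<dots> = tri_sum l (mult \<tau>) (map int r)"
    using assms by (intro tri_sum_full[symmetric]) (simp add: strings_def)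
  finally show ?thesis .
qed

definition prover_reply :: "prover \<Rightarrow> nat list \<Rightarrow> nat \<Rightarrow> bool list" where
  "prover_reply P r j = P (map (\<lambda>i. query i r) [0..<Suc j])"

fun rounds :: "prover \<Rightarrow> vstate \<Rightarrow> nat \<Rightarrow> vstate" where
  "rounds P st 0 = st"
| "rounds P st (Suc k) = receive k (rounds P st k) (prover_reply P (point st) k)"

definition transcript :: "prover \<Rightarrow> nat list \<Rightarrow> nat \<Rightarrow> (bool list \<times> bool list) list" where
  "transcript P r k = map (\<lambda>j. (query j r, prover_reply P r j)) [0..<k]"

lemma receive_keeps: "point (receive i st a) = point st \<and> val_xy (receive i st a) = val_xy st \<and>
    val_yz (receive i st a) = val_yz st \<and> val_xz (receive i st a) = val_xz st"
  by (simp add: receive_def)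

lemma rounds_keeps: "point (rounds P st k) = point st \<and> val_xy (rounds P st k) = val_xy st \<and>
    val_yz (rounds P st k) = val_yz st \<and> val_xz (rounds P st k) = val_xz st"
  by (induction k) (auto simp: receive_keeps)

lemma interaction_rounds:
  "interaction P k' (rounds P st k) (transcript P (point st) k)
     = (rounds P st (k + k'), transcript P (point st) (k + k'))"
proof (induction k' arbitrary: k)
  case (Suc k')
  let ?r = "point st"
  have len: "length (transcript P ?r k) = k" by (simp add: transcript_def)
  have pt: "point (rounds P st k) = ?r" using rounds_keeps by blast
  have "map fst (transcript P ?r k) = map (\<lambda>i. query i ?r) [0..<k]"
    by (simp add: transcript_def comp_def)
  then have reply: "P (map fst (transcript P ?r k) @ [query k ?r]) = prover_reply P ?r k"
    by (simp add: prover_reply_def)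
  have tr: "transcript P ?r k @ [(query k ?r, prover_reply P ?r k)] = transcript P ?r (Suc k)"
    by (simp add: transcript_def)
  have "interaction P (Suc k') (rounds P st k) (transcript P ?r k)
      = interaction P k' (rounds P st (Suc k)) (transcript P ?r (Suc k))"
    by (simp only: interaction.simps Let_def len pt reply tr rounds.simps)
  then show ?case using Suc.IH[of "Suc k"] by simp
qed simp

definition outcome :: "prover \<Rightarrow> update list \<Rightarrow> nat list \<Rightarrow> nat option" where
  "outcome P \<tau> r = (let st = rounds P (foldl stream_step (init_state r) \<tau>) (dim + 1)
     in if accepting st then Some (answer st) else None)"

lemma run_verifier:
  "run verifier P \<tau> = map_pmf (\<lambda>r. (outcome P \<tau> r, transcript P r (dim + 1))) (pmf_of_set (strings p dim))"
  unfolding run_verifier_interaction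
proof (rule map_pmf_cong[OF refl])
  fix r
  show "(case interaction P (dim + 1) (foldl stream_step (init_state r) \<tau>) [] of
       (st, tr) \<Rightarrow> (if accepting st then Some (answer st) else None, tr)) = (outcome P \<tau> r, transcript P r (dim + 1))"
    using interaction_rounds[of P "dim + 1" "foldl stream_step (init_state r) \<tau>" 0] stream_state[of r \<tau>]
    by (simp add: transcript_def outcome_def Let_def)
qed

definition reply :: "prover \<Rightarrow> nat list \<Rightarrow> bool list" where
  "reply P pre = P (map (\<lambda>i. query i pre) [0..<Suc (length pre)])"

lemma prover_reply_eq_reply: "j \<le> length r \<Longrightarrow> prover_reply P r j = reply P (take j r)"
proof -
  assume j: "j \<le> length r"
  have queries: "map (\<lambda>i. query i r) [0..<Suc j] = map (\<lambda>i. query i (take j r)) [0..<Suc j]"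
    by (rule map_cong[OF refl]) (auto simp: query_def)
  have "length (take j r) = j" using j by simp
  then show ?thesis by (simp only: prover_reply_def reply_def queries)
qed

definition reply_poly :: "prover \<Rightarrow> int list \<Rightarrow> int \<Rightarrow> int" where
  "reply_poly P pre X = (let a = reply P (map nat pre) in
     int (digit a 0) + int (digit a 1) * X + int (digit a 2) * X ^ 2)"

definition claimed_count :: "prover \<Rightarrow> nat" where
  "claimed_count P = digit (reply P []) 3"

lemma reply_poly_map_int: "reply_poly P (map int pre) X =
    int (digit (reply P pre) 0) + int (digit (reply P pre) 1) * X + int (digit (reply P pre) 2) * X ^ 2"
  by (simp add: reply_poly_def comp_def Let_def)

lemma has_degree_le_reply_poly: "has_degree_le 2 (reply_poly P pre)"
  unfolding has_degree_le_def reply_poly_def Let_def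
  by (rule exI[of _ "[:int (digit (reply P (map nat pre)) 0), int (digit (reply P (map nat pre)) 1),
      int (digit (reply P (map nat pre)) 2):]"]) (auto simp: degree_pCons_eq_if algebra_simps power2_eq_square)

lemma int_cong_iff_mod_eq: "[int x = int y] (mod int p) \<longleftrightarrow> x mod p = y mod p"
  by (simp add: cong_def flip: zmod_int)

lemma receive_round:
  fixes P :: prover
  assumes k: "k < dim" and r: "r \<in> strings p dim" "point st = r" and c: "k \<noteq> 0 \<Longrightarrow> claim st < p"
  defines "a \<equiv> reply P (take k r)"
  shows "accepting (receive k st a) \<longleftrightarrow> accepting st \<and>
           [(if k = 0 then int (6 * digit a 3) else int (claim st))
              = reply_poly P (map int (take k r)) 0 + reply_poly P (map int (take k r)) 1] (mod int p)"
    and "int (claim (receive k st a)) = reply_poly P (map int (take k r)) (int (r ! k)) mod int p"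
    and "answer (receive k st a) = (if k = 0 then digit a 3 else answer st)"
proof -
  let ?N = "2 * digit a 0 + digit a 1 + digit a 2"
  have sum: "reply_poly P (map int (take k r)) 0 + reply_poly P (map int (take k r)) 1 = int ?N"
    by (simp add: reply_poly_map_int a_def)
  have check: "?N mod p = (if k = 0 then 6 * digit a 3 mod p else claim st)
      \<longleftrightarrow> [(if k = 0 then int (6 * digit a 3) else int (claim st)) = int ?N] (mod int p)"
  proof (cases "k = 0")
    case True
    then show ?thesis using int_cong_iff_mod_eq[of "6 * digit a 3" ?N] by auto
  next
    case False
    then show ?thesis using int_cong_iff_mod_eq[of "claim st" ?N] mod_less[OF c[OF False]] by auto
  qed
  have "accepting (receive k st a) \<longleftrightarrow> accepting st \<and> ?N mod p = (if k = 0 then 6 * digit a 3 mod p else claim st)"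
    using k by (simp add: receive_def)
  then show "accepting (receive k st a) \<longleftrightarrow> accepting st \<and>
           [(if k = 0 then int (6 * digit a 3) else int (claim st))
              = reply_poly P (map int (take k r)) 0 + reply_poly P (map int (take k r)) 1] (mod int p)"
    unfolding check sum .
  show "int (claim (receive k st a)) = reply_poly P (map int (take k r)) (int (r ! k)) mod int p"
    using k r by (simp add: receive_def reply_poly_map_int a_def zmod_int)
  show "answer (receive k st a) = (if k = 0 then digit a 3 else answer st)"
    using k by (simp add: receive_def)
qed

lemma rounds_sumcheck:
  fixes P :: prover
  assumes r: "r \<in> strings p dim" and pt: "point st = r"
  defines "C \<equiv> sumcheck_claim (reply_poly P) (map int r) (int (6 * claimed_count P))"
  shows "1 \<le> k \<Longrightarrow> k \<le> dim \<Longrightarrow>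
     (accepting (rounds P st k) \<longleftrightarrow> accepting st \<and>
        (\<forall>j<k. [C j = reply_poly P (take j (map int r)) 0 + reply_poly P (take j (map int r)) 1] (mod int p)))
     \<and> int (claim (rounds P st k)) = C k mod int p \<and> answer (rounds P st k) = claimed_count P"
proof (induction k rule: nat_induct_at_least)
  case base
  have len: "0 < length r" using r l_pos by (simp add: strings_def)
  have "prover_reply P r 0 = reply P (take 0 r)" by (rule prover_reply_eq_reply) simp
  then have "rounds P st 1 = receive 0 st (reply P (take 0 r))" using pt by simp
  then show ?case
    using receive_round[of 0 r st P] r pt l_pos len
    by (simp add: C_def claimed_count_def sumcheck_claim_def take_map)
next
  case (Suc k)
  let ?st = "rounds P st k"
  have k: "k < dim" "1 \<le> k" using Suc by auto
  have len: "length r = dim" using r by (simp add: strings_def)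
  have IH: "accepting ?st \<longleftrightarrow> accepting st \<and>
        (\<forall>j<k. [C j = reply_poly P (take j (map int r)) 0 + reply_poly P (take j (map int r)) 1] (mod int p))"
    "int (claim ?st) = C k mod int p" "answer ?st = claimed_count P"
    using Suc by auto
  have pt': "point ?st = r" using rounds_keeps pt by metis
  have "int (claim ?st) < int p" unfolding IH(2) using p_pos by simp
  then have c: "claim ?st < p" by simp
  have "prover_reply P r k = reply P (take k r)" using k len by (intro prover_reply_eq_reply) simp
  then have step: "rounds P st (Suc k) = receive k ?st (reply P (take k r))" using pt by simp
  note round = receive_round[OF k(1) r pt' c, of P, folded step]
  have "[int (claim ?st) = reply_poly P (take k (map int r)) 0 + reply_poly P (take k (map int r)) 1] (mod int p)
      \<longleftrightarrow> [C k = reply_poly P (take k (map int r)) 0 + reply_poly P (take k (map int r)) 1] (mod int p)"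
    unfolding IH(2) by simp
  then have "accepting (rounds P st (Suc k)) \<longleftrightarrow> accepting st \<and>
        (\<forall>j<Suc k. [C j = reply_poly P (take j (map int r)) 0 + reply_poly P (take j (map int r)) 1] (mod int p))"
    using round(1) IH(1) k by (auto simp: take_map less_Suc_eq)
  moreover have "int (claim (rounds P st (Suc k))) = C (Suc k) mod int p"
    using round(2) k len by (simp add: C_def sumcheck_claim_Suc take_map)
  moreover have "answer (rounds P st (Suc k)) = claimed_count P"
    using round(3) IH(3) k by simp
  ultimately show ?case by blast
qed

lemma outcome_eq:
  fixes P :: prover and \<tau> :: "update list"
  assumes r: "r \<in> strings p dim"
  defines "st \<equiv> foldl stream_step (init_state r) \<tau>"
  shows "outcome P \<tau> r =
    (if sumcheck_accepts (int p) (reply_poly P) (map int r) (int (6 * claimed_count P))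
          (int (val_xy st * val_yz st * val_xz st))
     then Some (claimed_count P) else None)"
proof -
  let ?C = "sumcheck_claim (reply_poly P) (map int r) (int (6 * claimed_count P))"
  have len: "length r = dim" using r by (simp add: strings_def)
  have pt: "point st = r" and acc: "accepting st" using stream_state[of r \<tau>] by (auto simp: st_def)
  have inv: "(accepting (rounds P st dim) \<longleftrightarrow>
        (\<forall>j<dim. [?C j = reply_poly P (take j (map int r)) 0 + reply_poly P (take j (map int r)) 1] (mod int p)))"
    "int (claim (rounds P st dim)) = ?C dim mod int p" "answer (rounds P st dim) = claimed_count P"
    using rounds_sumcheck[OF r pt, of dim P] l_pos acc by auto
  have "claim (rounds P st dim) = val_xy st * val_yz st * val_xz st mod p
      \<longleftrightarrow> int (claim (rounds P st dim)) = int (val_xy st * val_yz st * val_xz st mod p)"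
    by (simp only: of_nat_eq_iff)
  also have "\<dots> \<longleftrightarrow> [?C dim = int (val_xy st * val_yz st * val_xz st)] (mod int p)"
    by (simp only: inv(2) zmod_int cong_def)
  finally have "accepting (rounds P st dim) \<and> claim (rounds P st dim) = val_xy st * val_yz st * val_xz st mod p
      \<longleftrightarrow> sumcheck_accepts (int p) (reply_poly P) (map int r) (int (6 * claimed_count P))
          (int (val_xy st * val_yz st * val_xz st))"
    by (simp only: sumcheck_accepts_def length_map len inv(1))
  moreover have "outcome P \<tau> r = (if accepting (rounds P st dim) \<and>
      claim (rounds P st dim) = val_xy st * val_yz st * val_xz st mod p
      then Some (answer (rounds P st dim)) else None)"
    using rounds_keeps[of P st dim] by (simp add: outcome_def st_def[symmetric] receive_def Let_def)
  ultimately show ?thesis using inv(3) by simp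
qed

section \<open>Completeness and soundness\<close>

definition honest_coeffs :: "update list \<Rightarrow> nat list \<Rightarrow> nat \<times> nat \<times> nat" where
  "honest_coeffs \<tau> pre = (SOME (c0, c1, c2). c0 < p \<and> c1 < p \<and> c2 < p \<and>
     (\<forall>X. [int c0 + int c1 * X + int c2 * X ^ 2 = tri_sum l (mult \<tau>) (map int pre @ [X])] (mod int p)))"

lemma honest_coeffs:
  assumes "length pre < dim" and "honest_coeffs \<tau> pre = (c0, c1, c2)"
  shows "c0 < p \<and> c1 < p \<and> c2 < p \<and>
    (\<forall>X. [int c0 + int c1 * X + int c2 * X ^ 2 = tri_sum l (mult \<tau>) (map int pre @ [X])] (mod int p))"
proof -
  obtain q where q: "degree q \<le> 2" "\<And>X. tri_sum l (mult \<tau>) (map int pre @ [X]) = poly q X"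
    using has_degree_le_tri_sum[of "map int pre" l "mult \<tau>"] assms(1)
    unfolding has_degree_le_def by auto
  let ?c = "(residue (coeff q 0), residue (coeff q 1), residue (coeff q 2))"
  have res: "[int (residue z) = z] (mod int p)" for z by (simp add: int_residue cong_def)
  have "[int (residue (coeff q 0)) + int (residue (coeff q 1)) * X + int (residue (coeff q 2)) * X ^ 2
      = tri_sum l (mult \<tau>) (map int pre @ [X])] (mod int p)" for X
    unfolding q(2) poly_degree_le_2[OF q(1)] by (intro cong_add cong_mult res cong_refl)
  then have "case ?c of (c0, c1, c2) \<Rightarrow> c0 < p \<and> c1 < p \<and> c2 < p \<and>
     (\<forall>X. [int c0 + int c1 * X + int c2 * X ^ 2 = tri_sum l (mult \<tau>) (map int pre @ [X])] (mod int p))"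
    by (simp add: residue_less)
  from someI[of "\<lambda>(c0, c1, c2). c0 < p \<and> c1 < p \<and> c2 < p \<and>
     (\<forall>X. [int c0 + int c1 * X + int c2 * X ^ 2 = tri_sum l (mult \<tau>) (map int pre @ [X])] (mod int p))", OF this]
  show ?thesis using assms(2) unfolding honest_coeffs_def by simp
qed

text \<open>The queries after the first one reveal the prefix of the random point fixed so far.\<close>
definition honest_prover :: "update list \<Rightarrow> nat \<Rightarrow> prover" where
  "honest_prover \<tau> T qs = (case honest_coeffs \<tau> (map (horner_sum of_bool 2) (tl qs)) of
     (c0, c1, c2) \<Rightarrow> bits (4 * w) (horner_sum id p [c0, c1, c2, T]))"

lemma decode_queries:
  assumes "\<forall>x\<in>set pre. x < p"
  shows "map (horner_sum of_bool 2) (tl (map (\<lambda>i. query i pre) [0..<Suc (length pre)])) = pre"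
proof (rule nth_equalityI)
  fix j assume "j < length (map (horner_sum of_bool 2) (tl (map (\<lambda>i. query i pre) [0..<Suc (length pre)])))"
  then have j: "j < length pre" by simp
  have "pre ! j < 2 ^ w" using assms j p_le_pow by (metis nth_mem order_less_le_trans)
  then show "map (horner_sum of_bool 2) (tl (map (\<lambda>i. query i pre) [0..<Suc (length pre)])) ! j = pre ! j"
    using j by (simp add: query_def horner_sum_bits upt_conv_Cons del: upt_Suc)
qed simp

lemma digit_bits_horner_sum:
  assumes "\<forall>c\<in>set cs. c < p" and "k < length cs"
  shows "digit (bits (length cs * w) (horner_sum id p cs)) k = cs ! k"
proof -
  have "horner_sum id p cs < p ^ length cs" using horner_sum_less_power[OF assms(1)] .
  also have "\<dots> \<le> (2 ^ w) ^ length cs" using p_le_pow by (intro power_mono) auto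
  also have "\<dots> = 2 ^ (length cs * w)" by (simp add: power_mult[symmetric] mult.commute)
  finally show ?thesis unfolding digit_def using horner_sum_bits horner_sum_digit[OF assms] by simp
qed

lemma honest_reply:
  assumes pre: "\<forall>x\<in>set pre. x < p" "length pre < dim" and T: "T < p"
    and c: "honest_coeffs \<tau> pre = (c0, c1, c2)"
  shows "reply_poly (honest_prover \<tau> T) (map int pre) X = int c0 + int c1 * X + int c2 * X ^ 2"
    and "digit (reply (honest_prover \<tau> T) pre) 3 = T"
proof -
  have reply: "reply (honest_prover \<tau> T) pre = bits (4 * w) (horner_sum id p [c0, c1, c2, T])"
    using c by (simp add: reply_def honest_prover_def decode_queries[OF pre(1)] del: upt_Suc)
  have less: "\<forall>x\<in>set [c0, c1, c2, T]. x < p" using honest_coeffs[OF pre(2) c] T by simp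
  have len4: "length [c0, c1, c2, T] * w = 4 * w" by simp
  note digits = digit_bits_horner_sum[OF less, unfolded len4, folded reply]
  show "reply_poly (honest_prover \<tau> T) (map int pre) X = int c0 + int c1 * X + int c2 * X ^ 2"
    using digits[of 0] digits[of 1] digits[of 2] by (simp add: reply_poly_map_int)
  show "digit (reply (honest_prover \<tau> T) pre) 3 = T"
    using digits[of 3] by simp
qed

lemma tri_sum_Nil_triangles:
  "valid_stream n \<tau> \<Longrightarrow> n \<le> 2 ^ l \<Longrightarrow> tri_sum l (mult \<tau>) [] = 6 * int (triangles n \<tau>)"
  using tri_sum_Nil[of l "mult \<tau>"] sum_adjacency_triangles by simp

lemma honest_outcome:
  assumes v: "valid_stream n \<tau>" and n: "n \<le> 2 ^ l" and T: "triangles n \<tau> < p"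
    and r: "r \<in> strings p dim"
  shows "outcome (honest_prover \<tau> (triangles n \<tau>)) \<tau> r = Some (triangles n \<tau>)"
proof -
  let ?H = "honest_prover \<tau> (triangles n \<tau>)" and ?S = "tri_sum l (mult \<tau>)"
  have len: "length r = dim" and less_p: "\<forall>x\<in>set r. x < p" using r by (auto simp: strings_def)
  have honest: "[reply_poly ?H (take k (map int r)) X = ?S (take k (map int r) @ [X])] (mod int p)"
    if "k < length (map int r)" for k X
  proof -
    obtain c0 c1 c2 where c: "honest_coeffs \<tau> (take k r) = (c0, c1, c2)" by (metis prod_cases3)
    have pre: "\<forall>x\<in>set (take k r). x < p" "length (take k r) < dim"
      using less_p that len by (auto dest: in_set_takeD)
    show ?thesis using honest_reply(1)[OF pre T c] honest_coeffs[OF pre(2) c] by (simp add: take_map)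
  qed
  obtain c0 c1 c2 where "honest_coeffs \<tau> [] = (c0, c1, c2)" by (metis prod_cases3)
  then have count: "claimed_count ?H = triangles n \<tau>"
    using honest_reply(2)[of "[]"] T l_pos by (simp add: claimed_count_def)
  have "sumcheck_accepts (int p) (reply_poly ?H) (map int r) (int (6 * claimed_count ?H))
      (int (val_xy (foldl stream_step (init_state r) \<tau>) * val_yz (foldl stream_step (init_state r) \<tau>)
        * val_xz (foldl stream_step (init_state r) \<tau>)))"
  proof (rule sumcheck_complete[where S = ?S])
    show "?S pre = ?S (pre @ [0]) + ?S (pre @ [1])" if "length pre < length (map int r)" for pre
      using that len by (intro tri_sum_split) simp
    show "[int (6 * claimed_count ?H) = ?S []] (mod int p)"
      using tri_sum_Nil_triangles[OF v n] count by simp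
  qed (use honest streamed_product_cong[OF r] in auto)
  then show ?thesis using outcome_eq[OF r] count by simp
qed

lemma six_times_cong_imp_eq:
  assumes "6 < p" "a < p" "b < p" and "[int (6 * a) = int (6 * b)] (mod int p)"
  shows "a = b"
proof -
  have "\<not> p dvd 6" using assms(1) by (auto dest: dvd_imp_le)
  then have "coprime 6 p" using prime_p by (simp add: prime_imp_coprime coprime_commute)
  then have "[a = b] (mod p)" using assms(4) cong_mult_lcancel_nat unfolding cong_int_iff by blast
  then show ?thesis using assms(2,3) by (rule cong_less_modulus_unique_nat)
qed

lemma wrong_outcome_fooled:
  assumes v: "valid_stream n \<tau>" and n: "n \<le> 2 ^ l" and T: "triangles n \<tau> < p" and p6: "6 < p"
    and r: "r \<in> strings p dim" and wrong: "outcome P \<tau> r \<notin> {Some (triangles n \<tau>), None}"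
  shows "sumcheck_fooled (int p) (reply_poly P) (tri_sum l (mult \<tau>)) (map int r)"
proof -
  let ?S = "tri_sum l (mult \<tau>)"
  have len: "length r = dim" using r by (simp add: strings_def)
  have acc: "sumcheck_accepts (int p) (reply_poly P) (map int r) (int (6 * claimed_count P))
      (int (val_xy (foldl stream_step (init_state r) \<tau>) * val_yz (foldl stream_step (init_state r) \<tau>)
        * val_xz (foldl stream_step (init_state r) \<tau>)))"
    and count: "claimed_count P \<noteq> triangles n \<tau>"
    using wrong unfolding outcome_eq[OF r] by (auto split: if_splits)
  have "\<not> [int (6 * claimed_count P) = ?S []] (mod int p)"
    using six_times_cong_imp_eq[OF p6 _ T] count digit_less tri_sum_Nil_triangles[OF v n]
    by (auto simp: claimed_count_def)
  from sumcheck_sound[where S = ?S, OF _ acc streamed_product_cong[OF r] this]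
  show ?thesis using len by (simp add: tri_sum_split)
qed

lemma measure_run_verifier:
  "measure_pmf.prob (run verifier P \<tau>) {x. fst x \<in> B} = card {r \<in> strings p dim. outcome P \<tau> r \<in> B} / p ^ dim"
  unfolding run_verifier using strings_nonempty
  by (simp add: measure_pmf_of_set card_strings Int_def conj_commute)

lemma completeness:
  assumes v: "valid_stream n \<tau>" and n: "n \<le> 2 ^ l" and T: "triangles n \<tau> < p"
  shows "measure_pmf.prob (run verifier (honest_prover \<tau> (triangles n \<tau>)) \<tau>)
           {x. fst x = Some (triangles n \<tau>)} = 1"
    and "\<forall>x\<in>set_pmf (run verifier (honest_prover \<tau> (triangles n \<tau>)) \<tau>). comm (snd x) \<le> (dim + 1) * (5 * w)"
proof -
  have "{r \<in> strings p dim. outcome (honest_prover \<tau> (triangles n \<tau>)) \<tau> r \<in> {Some (triangles n \<tau>)}}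
      = strings p dim"
    using honest_outcome[OF v n T] by auto
  then show "measure_pmf.prob (run verifier (honest_prover \<tau> (triangles n \<tau>)) \<tau>)
           {x. fst x = Some (triangles n \<tau>)} = 1"
    using measure_run_verifier[of _ _ "{Some (triangles n \<tau>)}"] p_pos by (simp add: card_strings)
  have "comm (transcript (honest_prover \<tau> T') r (dim + 1)) = (dim + 1) * (5 * w)" for T' r
  proof -
    have "length (honest_prover \<tau> T' qs) = 4 * w" for qs
      by (simp add: honest_prover_def split: prod.split)
    then have "comm (transcript (honest_prover \<tau> T') r (dim + 1)) = (\<Sum>j\<leftarrow>[0..<dim + 1]. w + 4 * w)"
      unfolding comm_def transcript_def by (simp add: query_def prover_reply_def comp_def del: upt_Suc)
    then show ?thesis by (simp add: sum_list_triv del: upt_Suc)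
  qed
  then show "\<forall>x\<in>set_pmf (run verifier (honest_prover \<tau> (triangles n \<tau>)) \<tau>). comm (snd x) \<le> (dim + 1) * (5 * w)"
    unfolding run_verifier by auto
qed

lemma soundness:
  assumes v: "valid_stream n \<tau>" and n: "n \<le> 2 ^ l" and T: "triangles n \<tau> < p" and p6: "6 * dim \<le> p"
  shows "measure_pmf.prob (run verifier P \<tau>) {x. fst x \<in> {Some (triangles n \<tau>), None}} \<ge> 2/3"
proof -
  let ?G = "{r \<in> strings p dim. outcome P \<tau> r \<in> {Some (triangles n \<tau>), None}}"
  have "6 < p" using p6 l_pos by simp
  have "strings p dim - ?G \<subseteq>
      {r \<in> strings p dim. sumcheck_fooled (int p) (reply_poly P) (tri_sum l (mult \<tau>)) (map int r)}"
    using wrong_outcome_fooled[OF v n T \<open>6 < p\<close>] by blast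
  then have "card (strings p dim - ?G) \<le>
      card {r \<in> strings p dim. sumcheck_fooled (int p) (reply_poly P) (tri_sum l (mult \<tau>)) (map int r)}"
    by (intro card_mono) auto
  also have "\<dots> \<le> dim * (2 * p ^ (dim - 1))"
    by (intro card_sumcheck_fooled_le prime_p has_degree_le_reply_poly has_degree_le_tri_sum)
  finally have bad: "card (strings p dim - ?G) \<le> dim * (2 * p ^ (dim - 1))" .
  define q where "q = p ^ (dim - 1)"
  have pq: "p ^ dim = p * q" unfolding q_def using l_pos by (cases dim) auto
  have G_le: "card ?G \<le> p ^ dim" using card_mono[of "strings p dim" ?G] by (simp add: card_strings)
  have "card (strings p dim - ?G) = p ^ dim - card ?G"
    using card_Diff_subset[of ?G "strings p dim"] by (simp add: card_strings)
  with bad G_le have "p ^ dim \<le> card ?G + dim * (2 * q)" unfolding q_def by linarith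
  then have "p * q \<le> 2 * (dim * q) + card ?G" unfolding pq by (simp add: algebra_simps)
  moreover have "dim * q * 6 \<le> p * q" using p6 by simp
  ultimately have "2 * (p * q) \<le> 3 * card ?G" by linarith
  then have "real (2 * p ^ dim) \<le> real (3 * card ?G)" unfolding pq by (simp only: of_nat_le_iff)
  then have "2 / 3 \<le> real (card ?G) / real (p ^ dim)" using p_pos by (simp add: field_simps)
  then show ?thesis using measure_run_verifier[of P \<tau> "{Some (triangles n \<tau>), None}"] by simp
qed

lemma is_SIP_verifier:
  assumes n: "n \<le> 2 ^ l" and p6: "6 * dim \<le> p" and n3: "n ^ 3 < p"
  shows "is_SIP (\<lambda>\<tau>. valid_stream n \<tau> \<and> length \<tau> \<le> n ^ d) (triangles n) (w * (dim + 6))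
           ((dim + 1) * (5 * w)) verifier"
  unfolding is_SIP_def
proof (intro conjI allI impI space_bounded_verifier)
  fix \<tau> assume "valid_stream n \<tau> \<and> length \<tau> \<le> n ^ d"
  then have v: "valid_stream n \<tau>" by simp
  have T: "triangles n \<tau> < p" using triangles_le[OF v] n3 by linarith
  show "\<exists>P. 2 / 3 \<le> measure_pmf.prob (run verifier P \<tau>) {x. fst x = Some (triangles n \<tau>)} \<and>
           (\<forall>x\<in>set_pmf (run verifier P \<tau>). comm (snd x) \<le> (dim + 1) * (5 * w))"
    using completeness[OF v n T] by (intro exI[of _ "honest_prover \<tau> (triangles n \<tau>)"]) simp
  fix P
  show "2 / 3 \<le> measure_pmf.prob (run verifier P \<tau>) {x. fst x = Some (triangles n \<tau>) \<or> fst x = None}"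
    using soundness[OF v n T p6, of P] by simp
qed

end

section \<open>Choice of parameters\<close>

lemma ceiling_log2_bounds:
  fixes x :: real assumes x: "1 \<le> x"
  shows "x \<le> 2 ^ nat \<lceil>log 2 x\<rceil>" and "real (nat \<lceil>log 2 x\<rceil>) \<le> log 2 x + 1"
    and "log 2 x \<le> real (nat \<lceil>log 2 x\<rceil>)"
proof -
  have c: "real (nat \<lceil>log 2 x\<rceil>) = of_int \<lceil>log 2 x\<rceil>" using x by simp
  show "real (nat \<lceil>log 2 x\<rceil>) \<le> log 2 x + 1" using c ceiling_correct[of "log 2 x"] by simp
  show le: "log 2 x \<le> real (nat \<lceil>log 2 x\<rceil>)" using c by simp
  have "x = 2 powr (log 2 x)" using x by simp
  also have "\<dots> \<le> 2 powr real (nat \<lceil>log 2 x\<rceil>)" using le by (intro powr_mono) auto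
  also have "\<dots> = 2 ^ nat \<lceil>log 2 x\<rceil>" by (rule powr_realpow) simp
  finally show "x \<le> 2 ^ nat \<lceil>log 2 x\<rceil>" .
qed

lemma log2_le_of_le_square_cube:
  fixes n p :: nat assumes n: "2 \<le> n" and p: "1 \<le> p" "p \<le> 2 * (16 * n ^ 3) ^ 2"
  shows "log 2 (real p) \<le> 9 + 6 * log 2 (real n)"
proof -
  have "real p \<le> real (2 * (16 * n ^ 3) ^ 2)" using p(2) by (simp only: of_nat_le_iff)
  then have "log 2 (real p) \<le> log 2 (2 * (16 * real n ^ 3) ^ 2)"
    using p n by (subst log_le_cancel_iff) auto
  also have "\<dots> = log 2 (2 ^ 9) + 6 * log 2 (real n)"
    using n by (simp add: log_mult log_nat_power)
  also have "log 2 ((2::real) ^ 9) = 9" using log_nat_power[of 2 2 9] by simp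
  finally show ?thesis .
qed

lemma sip_parameters:
  fixes n :: nat assumes n: "2 \<le> n"
  obtains l p w where "triangle_sip l p w" "n \<le> 2 ^ l" "6 * (3 * l) \<le> p" "n ^ 3 < p"
    "real (w * (3 * l + 6)) \<le> 600 * (log 2 (real n))\<^sup>2"
    "real ((3 * l + 1) * (5 * w)) \<le> 600 * (log 2 (real n))\<^sup>2"
proof -
  define L where "L = log 2 (real n)"
  have L1: "1 \<le> L" unfolding L_def using n by (simp add: le_log_iff)
  define l where "l = nat \<lceil>L\<rceil>"
  have nl: "n \<le> 2 ^ l" and lL: "real l \<le> L + 1" "L \<le> real l"
    using ceiling_log2_bounds[of "real n"] n unfolding l_def L_def by (auto simp flip: of_nat_le_iff)
  have "real (2 ^ l) \<le> 2 powr (L + 1)"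
    using lL(1) by (simp add: powr_realpow[symmetric])
  also have "\<dots> = real (2 * n)" using n by (simp add: L_def powr_add)
  finally have "2 ^ l \<le> 2 * n" by (simp only: of_nat_le_iff)
  then have "l \<le> 2 * n" using less_exp[of l] by linarith
  obtain p where p: "prime p" "16 * n ^ 3 < p" "p \<le> 2 * (16 * n ^ 3) ^ 2"
    using prime_between_square[of "16 * n ^ 3"] n by (auto simp: power_mono)
  define w where "w = nat \<lceil>log 2 (real p)\<rceil>"
  have p1: "1 \<le> real p" using p prime_ge_1_nat by simp
  have pw: "p \<le> 2 ^ w" and wp: "real w \<le> log 2 (real p) + 1"
    using ceiling_log2_bounds[OF p1] unfolding w_def by (auto simp flip: of_nat_le_iff)
  have wL: "real w \<le> 16 * L"
    using wp log2_le_of_le_square_cube[OF n _ p(3)] p1 L1 unfolding L_def by linarith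
  have "18 * l \<le> 36 * n" using \<open>l \<le> 2 * n\<close> by simp
  also have "\<dots> \<le> 16 * n ^ 3" using n power_mono[OF n, of 2] by (simp add: power3_eq_cube power2_eq_square)
  finally have p6: "6 * (3 * l) \<le> p" using p(2) by simp
  have "real (w * (3 * l + 6)) = real w * (3 * real l + 6)" by simp
  also have "\<dots> \<le> (16 * L) * (12 * L)" using wL lL L1 by (intro mult_mono) auto
  also have "\<dots> \<le> 600 * L\<^sup>2" by (simp add: power2_eq_square)
  finally have space: "real (w * (3 * l + 6)) \<le> 600 * L\<^sup>2" .
  have "real ((3 * l + 1) * (5 * w)) = (3 * real l + 1) * (5 * real w)" by (simp add: algebra_simps)
  also have "\<dots> \<le> (7 * L) * (5 * (16 * L))" using wL lL L1 by (intro mult_mono) auto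
  also have "\<dots> \<le> 600 * L\<^sup>2" by (simp add: power2_eq_square)
  finally have comm: "real ((3 * l + 1) * (5 * w)) \<le> 600 * L\<^sup>2" .
  have "triangle_sip l p w" using p pw lL L1 by unfold_locales auto
  with nl p6 p(2) space comm show ?thesis unfolding L_def by (intro that) auto
qed

theorem mainTheorem2:
  fixes d :: nat
  shows "\<exists>K::real. \<forall>n\<ge>2. \<exists>V S C.
           real S \<le> K * (log 2 (real n))^2 \<and> real C \<le> K * (log 2 (real n))^2 \<and>
           is_SIP (\<lambda>\<tau>. valid_stream n \<tau> \<and> length \<tau> \<le> n ^ d) (triangles n) S C V"
proof (intro exI[of _ 600] allI impI)
  fix n :: nat assume "2 \<le> n"
  then obtain l p w where sip: "triangle_sip l p w" and "n \<le> 2 ^ l" "6 * (3 * l) \<le> p" "n ^ 3 < p"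
    and "real (w * (3 * l + 6)) \<le> 600 * (log 2 (real n))\<^sup>2"
    and "real ((3 * l + 1) * (5 * w)) \<le> 600 * (log 2 (real n))\<^sup>2"
    by (rule sip_parameters)
  with triangle_sip.is_SIP_verifier[OF sip] show "\<exists>V S C.
      real S \<le> 600 * (log 2 (real n))\<^sup>2 \<and> real C \<le> 600 * (log 2 (real n))\<^sup>2 \<and>
      is_SIP (\<lambda>\<tau>. valid_stream n \<tau> \<and> length \<tau> \<le> n ^ d) (triangles n) S C V"
    by blast
qed

end
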